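(* Let $A\in P(n)$ have all entries real and nonnegative, with $A_{ii}\neq 0$ for all $i$. Let $p=(1,\dots,1)^T$. The following are equivalent: (1) there exists a vector $u\in\mathbb R^n$ with nonnegative entries such that $Au=p$; (2) $I(sp,A)=I(A)$. Moreover, when these hold and $u$ is as in (1), set $y=I(A)\,u$. Then (a) the vector $x=(y_1^{1/2},\dots,y_n^{1/2})^T$ satisfies $\|x\|=1$ and $\|A\circ xx^*\|=I(sp,A)$ (spectral norm); (b) with $J=\{i:u_i\neq0\}$ and $A_J$ the principal submatrix of $A$ with rows and columns indexed by $J$, one has $I(A)=I(A_J)=I(sp,A_J)=I(sp,A)$.
   Context: $P(k)$ denotes positive semidefinite complex $k\times k$ matrices and $\circ$ the Hadamard (entrywise) product. For $C\in P(k)$, with $P_k$ the all-ones $k\times k$ matrix, $I(C)=\max\{\lambda\ge0: C-\lambda P_k\ge0\}$, and $I(sp,C)=\min\{\|C\circ B\|: B\in P(k),\ \|B\|=1\}$ with $\|\cdot\|$ the spectral norm. *)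

theory Defs
  imports "HOL-Analysis.Analysis" "Jordan_Normal_Form.Matrix" "Jordan_Normal_Form.DL_Submatrix"
begin

(* P(k): positive semidefinite complex k x k matrices (complex order from HOL-Library.Complex_Order:
   0 \<le> z  iff  z is real and nonnegative) *)
definition psd :: "nat \<Rightarrow> complex mat \<Rightarrow> bool" where
  "psd k C \<longleftrightarrow> C \<in> carrier_mat k k \<and>
     (\<forall>v \<in> carrier_vec k. 0 \<le> conjugate v \<bullet> (C *\<^sub>v v))"

definition ones_mat :: "nat \<Rightarrow> complex mat" where
  "ones_mat k = mat k k (\<lambda>_. 1)"

definition hadamard :: "complex mat \<Rightarrow> complex mat \<Rightarrow> complex mat" (infixl "\<circ>\<^sub>h" 70) where
  "A \<circ>\<^sub>h B = mat (dim_row A) (dim_col A) (\<lambda>(i,j). A $$ (i,j) * B $$ (i,j))"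

definition vnorm :: "complex vec \<Rightarrow> real" where
  "vnorm v = sqrt (\<Sum>i<dim_vec v. (cmod (v $ i))\<^sup>2)"

definition spec_norm :: "complex mat \<Rightarrow> real" where
  "spec_norm A = Sup {vnorm (A *\<^sub>v v) | v. v \<in> carrier_vec (dim_col A) \<and> vnorm v = 1}"

definition I_mat :: "complex mat \<Rightarrow> real" where
  "I_mat C = Sup {t. t \<ge> 0 \<and> psd (dim_row C) (C - complex_of_real t \<cdot>\<^sub>m ones_mat (dim_row C))}"

definition I_sp :: "complex mat \<Rightarrow> real" where
  "I_sp C = Inf {spec_norm (C \<circ>\<^sub>h B) | B. psd (dim_row C) B \<and> spec_norm B = 1}"

end

theory Submission
  imports Defs
begin

(* For psd A and B with ||B|| = 1, a unit vector z almost attaining ||B z|| satisfies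
   B >= z z^* - eta I with eta small, so by the Schur product theorem
   ||A o B|| >= z^* (A o B) z >= w^T A w - eta tr A, where w_i = |z_i|^2 lies in the standard
   simplex. Hence I(sp,A) >= min {w^T A w | w in the simplex} >= I(A) for every psd A.
   If A u = p with u >= 0, then u^* A x = p^* x, and Cauchy-Schwarz for the form of A gives
   I(A) = 1 / sum u; the Schur test bounds ||A o x x^*|| by I(A) for x_i = (I(A) u_i)^(1/2),
   so I(sp,A) = I(A), attained at x x^*.
   Conversely, if I(sp,A) = I(A) then the minimum m of w^T A w on the simplex, attained at y,
   satisfies m <= I(A). So A - m P is psd and its form vanishes at y, whence A y = m p,
   and m > 0 because the diagonal of A is positive; u = y / m solves A u = p.
   Part (b) is part (a) for A_J and the restriction of u to its support J. *)

section \<open>Vectors, matrices and sesquilinear forms on the index set {..<n}\<close>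

text \<open>Vectors and matrices of size \<open>n\<close> are represented by functions on \<open>nat\<close>, of which only the
  values at indices below \<open>n\<close> matter; this keeps the dimension a term, so that principal
  submatrices of varying size can be handled.\<close>

definition inner_on :: "nat \<Rightarrow> (nat \<Rightarrow> complex) \<Rightarrow> (nat \<Rightarrow> complex) \<Rightarrow> complex" where
  "inner_on n x y = (\<Sum>i<n. cnj (x i) * y i)"

definition norm_on :: "nat \<Rightarrow> (nat \<Rightarrow> complex) \<Rightarrow> real" where
  "norm_on n x = sqrt (\<Sum>i<n. (cmod (x i))\<^sup>2)"

definition mult_on :: "nat \<Rightarrow> (nat \<Rightarrow> nat \<Rightarrow> complex) \<Rightarrow> (nat \<Rightarrow> complex) \<Rightarrow> nat \<Rightarrow> complex" where
  "mult_on n F x = (\<lambda>i. \<Sum>j<n. F i j * x j)"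

definition form_on :: "nat \<Rightarrow> (nat \<Rightarrow> nat \<Rightarrow> complex) \<Rightarrow> (nat \<Rightarrow> complex) \<Rightarrow> (nat \<Rightarrow> complex) \<Rightarrow> complex" where
  "form_on n F x y = (\<Sum>i<n. \<Sum>j<n. cnj (x i) * F i j * y j)"

definition psd_on :: "nat \<Rightarrow> (nat \<Rightarrow> nat \<Rightarrow> complex) \<Rightarrow> bool" where
  "psd_on n F \<longleftrightarrow> (\<forall>x. 0 \<le> form_on n F x x)"

definition basis_fun :: "nat \<Rightarrow> nat \<Rightarrow> complex" where
  "basis_fun i = (\<lambda>t. if t = i then 1 else 0)"

lemma cnj_mult_self: "cnj z * z = complex_of_real ((cmod z)\<^sup>2)"
  by (simp add: complex_norm_square[symmetric] mult.commute)

lemma norm_on_L2_set: "norm_on n x = L2_set (\<lambda>i. cmod (x i)) {..<n}"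
  unfolding norm_on_def L2_set_def by simp

lemma norm_on_nonneg: "0 \<le> norm_on n x"
  unfolding norm_on_def by (simp add: sum_nonneg)

lemma norm_on_power2: "(norm_on n x)\<^sup>2 = (\<Sum>i<n. (cmod (x i))\<^sup>2)"
  unfolding norm_on_def by (simp add: sum_nonneg)

lemma norm_on_cong: "(\<And>i. i < n \<Longrightarrow> x i = y i) \<Longrightarrow> norm_on n x = norm_on n y"
  unfolding norm_on_def by (intro arg_cong[where f=sqrt] sum.cong) auto

lemma norm_on_scale: "norm_on n (\<lambda>i. c * x i) = cmod c * norm_on n x"
  unfolding norm_on_def
  by (simp add: norm_mult power_mult_distrib sum_distrib_left[symmetric] real_sqrt_mult)

lemma norm_on_eq_0D: "norm_on n x = 0 \<Longrightarrow> i < n \<Longrightarrow> x i = 0"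
  using norm_on_power2[of n x] sum_nonneg_eq_0_iff[of "{..<n}" "\<lambda>i. (cmod (x i))\<^sup>2"] by auto

lemma sum_basis_fun_right: "j < n \<Longrightarrow> (\<Sum>t<n. g t * basis_fun j t) = g j"
  unfolding basis_fun_def by (simp add: if_distrib[of "\<lambda>z. _ * z"] cong: if_cong)

lemma sum_basis_fun_left: "j < n \<Longrightarrow> (\<Sum>t<n. cnj (basis_fun j t) * g t) = g j"
  unfolding basis_fun_def by (simp add: if_distrib[of "\<lambda>z. cnj z * _"] cong: if_cong)

lemma sum_basis_fun: "j < n \<Longrightarrow> (\<Sum>t<n. basis_fun j t) = 1"
  unfolding basis_fun_def by simp

lemma norm_on_basis_fun: "i < n \<Longrightarrow> norm_on n (basis_fun i) = 1"
  unfolding norm_on_def basis_fun_def by (simp add: if_distrib[of "\<lambda>z. (cmod z)\<^sup>2"] cong: if_cong)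

lemma norm_le_norm_on: "j < n \<Longrightarrow> cmod (x j) \<le> norm_on n x"
  unfolding norm_on_L2_set by (rule member_le_L2_set) auto

lemma inner_on_self: "inner_on n x x = complex_of_real ((norm_on n x)\<^sup>2)"
  unfolding norm_on_power2 inner_on_def of_real_sum by (simp add: cnj_mult_self)

lemma inner_on_commute: "inner_on n y x = cnj (inner_on n x y)"
  unfolding inner_on_def by (simp add: mult.commute)

lemma inner_on_add_left: "inner_on n (\<lambda>i. x i + y i) z = inner_on n x z + inner_on n y z"
  unfolding inner_on_def by (simp add: algebra_simps sum.distrib)

lemma inner_on_cong:
  "(\<And>i. i < n \<Longrightarrow> x i = x' i) \<Longrightarrow> (\<And>i. i < n \<Longrightarrow> y i = y' i) \<Longrightarrow> inner_on n x y = inner_on n x' y'"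
  unfolding inner_on_def by (intro sum.cong) auto

lemma inner_on_Cauchy_Schwarz: "cmod (inner_on n x y) \<le> norm_on n x * norm_on n y"
proof -
  have "cmod (inner_on n x y) \<le> (\<Sum>i<n. cmod (cnj (x i) * y i))"
    unfolding inner_on_def by (rule norm_sum)
  also have "\<dots> = (\<Sum>i<n. \<bar>cmod (x i)\<bar> * \<bar>cmod (y i)\<bar>)"
    by (simp add: norm_mult)
  also have "\<dots> \<le> norm_on n x * norm_on n y"
    unfolding norm_on_L2_set by (rule L2_set_mult_ineq)
  finally show ?thesis .
qed

lemma norm_on_diff_power2:
  "(norm_on n (\<lambda>i. x i - y i))\<^sup>2 = (norm_on n x)\<^sup>2 - 2 * Re (inner_on n y x) + (norm_on n y)\<^sup>2"
proof -
  have "(cmod (a - b))\<^sup>2 = (cmod a)\<^sup>2 - 2 * Re (cnj b * a) + (cmod b)\<^sup>2" for a b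
    unfolding cmod_power2 by (simp add: power2_eq_square algebra_simps)
  then show ?thesis
    unfolding norm_on_power2 inner_on_def Re_sum
    by (simp add: sum.distrib sum_subtractf sum_distrib_left)
qed

lemma mult_on_scale: "mult_on n F (\<lambda>i. c * x i) = (\<lambda>i. c * mult_on n F x i)"
  unfolding mult_on_def by (simp add: sum_distrib_left algebra_simps)

lemma form_on_eq_inner_on: "form_on n F x y = inner_on n x (mult_on n F y)"
  unfolding form_on_def inner_on_def mult_on_def by (simp add: sum_distrib_left algebra_simps)

lemma form_on_cong:
  "(\<And>i j. i < n \<Longrightarrow> j < n \<Longrightarrow> F i j = G i j) \<Longrightarrow> form_on n F x y = form_on n G x y"
  unfolding form_on_def by (intro sum.cong refl) auto

lemma form_on_add_left: "form_on n F (\<lambda>i. x i + y i) z = form_on n F x z + form_on n F y z"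
  unfolding form_on_def by (simp add: distrib_right sum.distrib)

lemma form_on_add_right: "form_on n F x (\<lambda>i. y i + z i) = form_on n F x y + form_on n F x z"
  unfolding form_on_def by (simp add: distrib_left sum.distrib)

lemma form_on_scale_left: "form_on n F (\<lambda>i. c * x i) y = cnj c * form_on n F x y"
  unfolding form_on_def by (simp add: sum_distrib_left algebra_simps)

lemma form_on_scale_right: "form_on n F x (\<lambda>i. c * y i) = c * form_on n F x y"
  unfolding form_on_def by (simp add: sum_distrib_left algebra_simps)

lemma form_on_add: "form_on n (\<lambda>i j. F i j + G i j) x y = form_on n F x y + form_on n G x y"
  unfolding form_on_def by (simp add: algebra_simps sum.distrib)

lemma form_on_diff: "form_on n (\<lambda>i j. F i j - G i j) x y = form_on n F x y - form_on n G x y"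
  unfolding form_on_def by (simp add: algebra_simps sum_subtractf)

lemma form_on_basis_fun_right: "j < n \<Longrightarrow> form_on n F x (basis_fun j) = (\<Sum>i<n. cnj (x i) * F i j)"
  unfolding form_on_def by (simp add: sum_basis_fun_right)

lemma form_on_basis_fun: "i < n \<Longrightarrow> j < n \<Longrightarrow> form_on n F (basis_fun i) (basis_fun j) = F i j"
  by (simp add: form_on_basis_fun_right sum_basis_fun_left)

lemma form_on_rank1: "form_on n (\<lambda>i j. v i * cnj (v j)) x y = inner_on n x v * inner_on n v y"
  unfolding form_on_def inner_on_def sum_product by (intro sum.cong refl) (simp add: algebra_simps)

lemma form_on_diagonal:
  "form_on n (\<lambda>i j. if i = j then D i else 0) x y = (\<Sum>i<n. cnj (x i) * D i * y i)"
  unfolding form_on_def by (simp add: if_distrib[of "\<lambda>z. _ * z * _"] cong: if_cong)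

lemma form_on_const: "form_on n (\<lambda>i j. c) x y = c * (cnj (\<Sum>i<n. x i) * (\<Sum>j<n. y j))"
  unfolding form_on_def cnj_sum sum_product by (simp add: sum_distrib_left algebra_simps)

section \<open>Positive semidefinite kernels\<close>

lemma psd_on_Im_form: "psd_on n F \<Longrightarrow> Im (form_on n F x x) = 0"
  unfolding psd_on_def less_eq_complex_def by auto

lemma psd_on_Re_form_nonneg: "psd_on n F \<Longrightarrow> 0 \<le> Re (form_on n F x x)"
  unfolding psd_on_def less_eq_complex_def by auto

lemma psd_onI: "(\<And>x. Im (form_on n F x x) = 0 \<and> 0 \<le> Re (form_on n F x x)) \<Longrightarrow> psd_on n F"
  unfolding psd_on_def less_eq_complex_def by auto

lemma psd_on_cong: "psd_on n F \<Longrightarrow> (\<And>i j. i < n \<Longrightarrow> j < n \<Longrightarrow> F i j = G i j) \<Longrightarrow> psd_on n G"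
  unfolding psd_on_def using form_on_cong[of n F G] by metis

lemma psd_on_Im_diag: "psd_on n F \<Longrightarrow> i < n \<Longrightarrow> Im (F i i) = 0"
  using psd_on_Im_form[of n F "basis_fun i"] by (simp add: form_on_basis_fun)

lemma psd_on_Re_diag_nonneg: "psd_on n F \<Longrightarrow> i < n \<Longrightarrow> 0 \<le> Re (F i i)"
  using psd_on_Re_form_nonneg[of n F "basis_fun i"] by (simp add: form_on_basis_fun)

lemma psd_on_hermitian:
  assumes "psd_on n F" "i < n" "j < n"
  shows "F j i = cnj (F i j)"
proof -
  have "Im (c * F i j + cnj c * F j i) = 0" for c
  proof -
    let ?x = "\<lambda>t. basis_fun i t + c * basis_fun j t"
    have "form_on n F ?x ?x = F i i + (c * F i j + cnj c * F j i) + complex_of_real ((cmod c)\<^sup>2) * F j j"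
      using assms(2,3) cnj_mult_self[of c]
      by (simp add: form_on_add_left form_on_add_right form_on_scale_left form_on_scale_right
          form_on_basis_fun algebra_simps)
    then show ?thesis
      using psd_on_Im_form[OF assms(1), of ?x] psd_on_Im_diag[OF assms(1)] assms(2,3) by simp
  qed
  from this[of 1] this[of \<i>] show ?thesis
    by (simp add: complex_eq_iff)
qed

lemma form_on_swap:
  assumes "psd_on n F"
  shows "form_on n F y x = cnj (form_on n F x y)"
proof -
  have "cnj (y i) * F i j * x j = cnj (cnj (x j) * F j i * y i)" if "i < n" "j < n" for i j
    using psd_on_hermitian[OF assms that(2,1)] by simp
  then show ?thesis
    unfolding form_on_def cnj_sum by (subst sum.swap) (auto intro!: sum.cong)
qed

lemma form_on_eq_inner_on_left: "psd_on n F \<Longrightarrow> form_on n F x y = inner_on n (mult_on n F x) y"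
  using form_on_swap[of n F y x] form_on_eq_inner_on[of n F y x] inner_on_commute[of n "mult_on n F x" y]
  by simp

lemma le_mult_of_quadratic_nonneg:
  fixes a b c :: real
  assumes "\<And>r. 0 \<le> a - 2 * r * b + r\<^sup>2 * b * c" "0 \<le> b" "0 \<le> c"
  shows "b \<le> a * c"
proof (cases "c = 0")
  case True
  show ?thesis
  proof (rule ccontr)
    assume "\<not> b \<le> a * c"
    then have "b > 0" using True by simp
    moreover have "0 \<le> a - 2 * ((a + 1) / (2 * b)) * b"
      using assms(1)[of "(a + 1) / (2 * b)"] True by simp
    ultimately show False by (simp add: field_simps)
  qed
next
  case False
  then have "c > 0" using assms(3) by simp
  moreover have "0 \<le> a - 2 * (1 / c) * b + (1 / c)\<^sup>2 * b * c" by (rule assms(1))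
  ultimately show ?thesis by (simp add: power2_eq_square field_simps)
qed

lemma form_on_Cauchy_Schwarz:
  assumes "psd_on n F"
  shows "(cmod (form_on n F x y))\<^sup>2 \<le> Re (form_on n F x x) * Re (form_on n F y y)"
proof (rule le_mult_of_quadratic_nonneg)
  let ?c = "form_on n F x y"
  fix r :: real
  define t where "t = - (complex_of_real r * cnj ?c)"
  have "form_on n F (\<lambda>i. x i + t * y i) (\<lambda>i. x i + t * y i)
      = form_on n F x x + t * ?c + cnj t * form_on n F y x + cnj t * t * form_on n F y y"
    by (simp add: form_on_add_left form_on_add_right form_on_scale_left form_on_scale_right algebra_simps)
  also have "\<dots> = form_on n F x x - of_real (2 * r) * (?c * cnj ?c)
      + of_real (r\<^sup>2) * (?c * cnj ?c) * form_on n F y y"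
    unfolding t_def form_on_swap[OF assms, of y x] by (simp add: power2_eq_square algebra_simps)
  also have "\<dots> = form_on n F x x - complex_of_real (2 * r * (cmod ?c)\<^sup>2)
      + complex_of_real (r\<^sup>2 * (cmod ?c)\<^sup>2) * form_on n F y y"
    unfolding complex_norm_square[symmetric] by simp
  finally show "0 \<le> Re (form_on n F x x) - 2 * r * (cmod ?c)\<^sup>2 + r\<^sup>2 * (cmod ?c)\<^sup>2 * Re (form_on n F y y)"
    using psd_on_Re_form_nonneg[OF assms, of "\<lambda>i. x i + t * y i"] by simp
qed (use psd_on_Re_form_nonneg[OF assms] in auto)

lemma psd_on_diag_zero_row:
  assumes "psd_on n F" "k < n" "j < n" "F k k = 0"
  shows "F k j = 0"
proof -
  have "(cmod (form_on n F (basis_fun k) (basis_fun j)))\<^sup>2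
      \<le> Re (form_on n F (basis_fun k) (basis_fun k)) * Re (form_on n F (basis_fun j) (basis_fun j))"
    by (rule form_on_Cauchy_Schwarz[OF assms(1)])
  then show ?thesis
    using assms(2-4) by (simp add: form_on_basis_fun)
qed

text \<open>The pivot column of a Cholesky step. If \<open>F k k = 0\<close> it is zero, because division by zero
  yields zero; row and column \<open>k\<close> of a psd \<open>F\<close> then vanish anyway.\<close>

definition pivot_col :: "nat \<Rightarrow> (nat \<Rightarrow> nat \<Rightarrow> complex) \<Rightarrow> nat \<Rightarrow> complex" where
  "pivot_col k F = (\<lambda>i. F i k / complex_of_real (sqrt (Re (F k k))))"

lemma psd_on_row_eq_pivot_col:
  assumes F: "psd_on n F" and k: "k < n" and j: "j < n"
  shows "F k j = pivot_col k F k * cnj (pivot_col k F j)"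
proof -
  define d where "d = Re (F k k)"
  have Fkk: "F k k = complex_of_real d"
    using psd_on_Im_diag[OF F k] unfolding d_def by (simp add: complex_eq_iff)
  show ?thesis
  proof (cases "d = 0")
    case True
    then show ?thesis
      using psd_on_diag_zero_row[OF F k j] Fkk by (simp add: pivot_col_def)
  next
    case False
    define s where "s = complex_of_real (sqrt d)"
    have ss: "s * s = F k k"
      using psd_on_Re_diag_nonneg[OF F k] Fkk unfolding s_def d_def by (simp flip: of_real_mult)
    have "pivot_col k F k * cnj (pivot_col k F j) = F k k * cnj (F j k) / (s * s)"
      unfolding pivot_col_def d_def[symmetric] s_def by simp
    also have "\<dots> = cnj (F j k)"
      using False Fkk unfolding ss by simp
    also have "\<dots> = F k j"
      using psd_on_hermitian[OF F k j] by simp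
    finally show ?thesis by simp
  qed
qed

lemma psd_on_col_eq_pivot_col:
  "psd_on n F \<Longrightarrow> k < n \<Longrightarrow> i < n \<Longrightarrow> F i k = pivot_col k F i * cnj (pivot_col k F k)"
  using psd_on_row_eq_pivot_col[of n F k i] psd_on_hermitian[of n F k i] by (simp add: mult.commute)

lemma norm_inner_on_pivot_col_le:
  assumes F: "psd_on n F" and k: "k < n"
  shows "(cmod (inner_on n (pivot_col k F) x))\<^sup>2 \<le> Re (form_on n F x x)"
proof (cases "Re (F k k) = 0")
  case True
  then show ?thesis
    using psd_on_Re_form_nonneg[OF F] by (simp add: pivot_col_def inner_on_def)
next
  case False
  define d where "d = Re (F k k)"
  have "d > 0"
    using False psd_on_Re_diag_nonneg[OF F k] unfolding d_def by simp
  have Fkk: "F k k = complex_of_real d"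
    using psd_on_Im_diag[OF F k] unfolding d_def by (simp add: complex_eq_iff)
  have "form_on n F x (basis_fun k) = complex_of_real (sqrt d) * inner_on n x (pivot_col k F)"
    using \<open>d > 0\<close> unfolding form_on_basis_fun_right[OF k] inner_on_def pivot_col_def d_def sum_distrib_left
    by (intro sum.cong refl) simp
  then have "d * (cmod (inner_on n (pivot_col k F) x))\<^sup>2 \<le> Re (form_on n F x x) * d"
    using form_on_Cauchy_Schwarz[OF F, of x "basis_fun k"] k \<open>d > 0\<close>
    by (simp add: form_on_basis_fun Fkk norm_mult power_mult_distrib inner_on_commute[of n _ x])
  then show ?thesis
    using \<open>d > 0\<close> by (simp add: mult.commute)
qed

lemma psd_on_sub_rank1I:
  assumes "psd_on n F" "\<And>x. (cmod (inner_on n v x))\<^sup>2 \<le> Re (form_on n F x x)"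
  shows "psd_on n (\<lambda>i j. F i j - v i * cnj (v j))"
proof (rule psd_onI)
  fix x
  have "form_on n (\<lambda>i j. F i j - v i * cnj (v j)) x x
      = form_on n F x x - complex_of_real ((cmod (inner_on n v x))\<^sup>2)"
    by (simp add: form_on_diff form_on_rank1 inner_on_commute[of n x v] cnj_mult_self)
  then show "Im (form_on n (\<lambda>i j. F i j - v i * cnj (v j)) x x) = 0
      \<and> 0 \<le> Re (form_on n (\<lambda>i j. F i j - v i * cnj (v j)) x x)"
    using assms(2)[of x] psd_on_Im_form[OF assms(1), of x] by simp
qed

lemma psd_on_deflate:
  "psd_on n F \<Longrightarrow> k < n \<Longrightarrow> psd_on n (\<lambda>i j. F i j - pivot_col k F i * cnj (pivot_col k F j))"
  by (intro psd_on_sub_rank1I norm_inner_on_pivot_col_le)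

lemma psd_on_deflate_vanishes:
  assumes F: "psd_on n F" and k: "k < n" and zero: "\<forall>i<n. \<forall>j<n. i < k \<or> j < k \<longrightarrow> F i j = 0"
  shows "\<forall>i<n. \<forall>j<n. i < Suc k \<or> j < Suc k \<longrightarrow> F i j - pivot_col k F i * cnj (pivot_col k F j) = 0"
proof (intro allI impI)
  fix i j
  assume ij: "i < n" "j < n" and "i < Suc k \<or> j < Suc k"
  then consider "i < k \<or> j < k" | "i = k" | "j = k"
    by (auto simp: less_Suc_eq)
  then show "F i j - pivot_col k F i * cnj (pivot_col k F j) = 0"
  proof cases
    case 1
    then have "F i j = 0" "pivot_col k F i = 0 \<or> pivot_col k F j = 0"
      using zero ij k unfolding pivot_col_def by auto
    then show ?thesis by auto
  next
    case 2
    then show ?thesis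
      using psd_on_row_eq_pivot_col[OF F k ij(2)] by simp
  next
    case 3
    then show ?thesis
      using psd_on_col_eq_pivot_col[OF F k ij(1)] by simp
  qed
qed

lemma psd_on_gram_from:
  assumes "psd_on n F" "k \<le> n" "\<forall>i<n. \<forall>j<n. i < k \<or> j < k \<longrightarrow> F i j = 0"
  shows "\<exists>w. \<forall>i<n. \<forall>j<n. F i j = (\<Sum>l\<in>{k..<n}. w l i * cnj (w l j))"
  using assms
proof (induction "n - k" arbitrary: k F)
  case 0
  then have "k = n" by simp
  with 0 show ?case by auto
next
  case (Suc d)
  then have k: "k < n" by simp
  define v where "v = pivot_col k F"
  define G where "G = (\<lambda>i j. F i j - v i * cnj (v j))"
  have "d = n - Suc k" "Suc k \<le> n"
    using Suc.hyps(2) k by simp_all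
  then obtain w where w: "\<forall>i<n. \<forall>j<n. G i j = (\<Sum>l\<in>{Suc k..<n}. w l i * cnj (w l j))"
    using Suc.hyps(1)[of "Suc k" G] psd_on_deflate[OF Suc.prems(1) k]
      psd_on_deflate_vanishes[OF Suc.prems(1) k Suc.prems(3)]
    unfolding G_def v_def by blast
  have "F i j = (\<Sum>l\<in>{k..<n}. (w(k := v)) l i * cnj ((w(k := v)) l j))" if "i < n" "j < n" for i j
  proof -
    have "(\<Sum>l\<in>{Suc k..<n}. (w(k := v)) l i * cnj ((w(k := v)) l j))
        = (\<Sum>l\<in>{Suc k..<n}. w l i * cnj (w l j))"
      by (intro sum.cong) auto
    then have "(\<Sum>l\<in>{k..<n}. (w(k := v)) l i * cnj ((w(k := v)) l j)) = v i * cnj (v j) + G i j"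
      using k w that by (simp add: sum.atLeast_Suc_lessThan)
    then show ?thesis
      unfolding G_def by simp
  qed
  then show ?case by blast
qed

lemma psd_on_gram:
  assumes "psd_on n F"
  shows "\<exists>w. \<forall>i<n. \<forall>j<n. F i j = (\<Sum>l<n. w l i * cnj (w l j))"
  using psd_on_gram_from[OF assms, of 0] by (simp add: atLeast0LessThan)

theorem psd_on_hadamard:
  assumes "psd_on n F" "psd_on n G"
  shows "psd_on n (\<lambda>i j. F i j * G i j)"
proof (rule psd_onI)
  fix x
  obtain w where w: "\<forall>i<n. \<forall>j<n. G i j = (\<Sum>l<n. w l i * cnj (w l j))"
    using psd_on_gram[OF assms(2)] by blast
  let ?x = "\<lambda>l i. x i * cnj (w l i)"
  have "form_on n (\<lambda>i j. F i j * G i j) x x = (\<Sum>i<n. \<Sum>j<n. \<Sum>l<n. cnj (?x l i) * F i j * ?x l j)"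
    unfolding form_on_def using w by (intro sum.cong refl) (simp add: sum_distrib_left algebra_simps)
  also have "\<dots> = (\<Sum>i<n. \<Sum>l<n. \<Sum>j<n. cnj (?x l i) * F i j * ?x l j)"
    by (intro sum.cong refl sum.swap)
  also have "\<dots> = (\<Sum>l<n. form_on n F (?x l) (?x l))"
    unfolding form_on_def by (rule sum.swap)
  finally show "Im (form_on n (\<lambda>i j. F i j * G i j) x x) = 0 \<and> 0 \<le> Re (form_on n (\<lambda>i j. F i j * G i j) x x)"
    using psd_on_Im_form[OF assms(1)] psd_on_Re_form_nonneg[OF assms(1)]
    by (simp add: sum_nonneg)
qed

section \<open>The operator norm\<close>

definition opnorm_on :: "nat \<Rightarrow> (nat \<Rightarrow> nat \<Rightarrow> complex) \<Rightarrow> real" where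
  "opnorm_on n F = Sup {norm_on n (mult_on n F x) | x. norm_on n x = 1}"

lemma bdd_above_opnorm_on: "bdd_above {norm_on n (mult_on n F x) | x. norm_on n x = 1}"
proof (rule bdd_aboveI)
  fix r assume "r \<in> {norm_on n (mult_on n F x) | x. norm_on n x = 1}"
  then obtain x where x: "norm_on n x = 1" "r = norm_on n (mult_on n F x)" by blast
  have "norm_on n (mult_on n F x) \<le> (\<Sum>i<n. \<bar>cmod (mult_on n F x i)\<bar>)"
    unfolding norm_on_L2_set by (rule L2_set_le_sum_abs)
  also have "\<dots> \<le> (\<Sum>i<n. \<Sum>j<n. cmod (F i j * x j))"
    unfolding mult_on_def by (intro sum_mono) (simp add: norm_sum)
  also have "\<dots> \<le> (\<Sum>i<n. \<Sum>j<n. cmod (F i j))"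
    using norm_le_norm_on[of _ n x] x(1) by (intro sum_mono) (simp add: norm_mult mult_left_le)
  finally show "r \<le> (\<Sum>i<n. \<Sum>j<n. cmod (F i j))" using x(2) by simp
qed

lemma norm_on_mult_le_opnorm_on: "norm_on n x = 1 \<Longrightarrow> norm_on n (mult_on n F x) \<le> opnorm_on n F"
  unfolding opnorm_on_def by (rule cSup_upper[OF _ bdd_above_opnorm_on]) blast

lemma opnorm_on_le:
  assumes "n > 0" "\<And>x. norm_on n x = 1 \<Longrightarrow> norm_on n (mult_on n F x) \<le> c"
  shows "opnorm_on n F \<le> c"
  unfolding opnorm_on_def
  using assms norm_on_basis_fun[of 0 n] by (intro cSup_least) auto

lemma opnorm_on_approx:
  assumes "n > 0" "\<epsilon> > 0"
  obtains z where "norm_on n z = 1" "opnorm_on n F - \<epsilon> < norm_on n (mult_on n F z)"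
proof -
  have "{norm_on n (mult_on n F x) | x. norm_on n x = 1} \<noteq> {}"
    using norm_on_basis_fun[of 0 n] assms(1) by blast
  from less_cSupD[OF this, of "opnorm_on n F - \<epsilon>"] assms(2) that show ?thesis
    unfolding opnorm_on_def by auto
qed

lemma opnorm_on_nonneg: "n > 0 \<Longrightarrow> 0 \<le> opnorm_on n F"
  using norm_on_nonneg norm_on_mult_le_opnorm_on[OF norm_on_basis_fun] by (rule order_trans)

lemma norm_on_mult_le: "norm_on n (mult_on n F x) \<le> opnorm_on n F * norm_on n x"
proof (cases "norm_on n x = 0")
  case True
  then have "mult_on n F x i = 0" for i
    unfolding mult_on_def using norm_on_eq_0D[OF True] by simp
  then show ?thesis
    using True by (simp add: norm_on_def)
next
  case False
  then have pos: "norm_on n x > 0"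
    using norm_on_nonneg[of n x] by simp
  define c where "c = complex_of_real (1 / norm_on n x)"
  have "norm_on n (\<lambda>i. c * x i) = 1"
    unfolding norm_on_scale c_def using pos by (simp add: norm_divide)
  then have "norm_on n (mult_on n F (\<lambda>i. c * x i)) \<le> opnorm_on n F"
    by (rule norm_on_mult_le_opnorm_on)
  then have "norm_on n (mult_on n F x) / norm_on n x \<le> opnorm_on n F"
    unfolding mult_on_scale norm_on_scale c_def using pos by (simp add: norm_divide)
  then show ?thesis
    using pos by (simp add: field_simps)
qed

lemma Re_form_on_le_opnorm_on: "Re (form_on n F x x) \<le> opnorm_on n F * (norm_on n x)\<^sup>2"
proof -
  have "Re (form_on n F x x) \<le> cmod (inner_on n x (mult_on n F x))"
    unfolding form_on_eq_inner_on by (rule complex_Re_le_cmod)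
  also have "\<dots> \<le> norm_on n x * norm_on n (mult_on n F x)"
    by (rule inner_on_Cauchy_Schwarz)
  also have "\<dots> \<le> norm_on n x * (opnorm_on n F * norm_on n x)"
    by (rule mult_left_mono[OF norm_on_mult_le norm_on_nonneg])
  finally show ?thesis
    by (simp add: power2_eq_square mult_ac)
qed

lemma opnorm_on_cong:
  assumes "\<And>i j. i < n \<Longrightarrow> j < n \<Longrightarrow> F i j = G i j"
  shows "opnorm_on n F = opnorm_on n G"
proof -
  have "norm_on n (mult_on n F x) = norm_on n (mult_on n G x)" for x
    by (rule norm_on_cong) (simp add: mult_on_def assms)
  then show ?thesis
    unfolding opnorm_on_def by simp
qed

lemma psd_on_rank1: "psd_on n (\<lambda>i j. v i * cnj (v j))"
  by (rule psd_onI) (simp add: form_on_rank1 inner_on_commute[of n _ v] cnj_mult_self)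

lemma opnorm_on_rank1:
  assumes "n > 0" "norm_on n v = 1"
  shows "opnorm_on n (\<lambda>i j. v i * cnj (v j)) = 1"
proof -
  have mult: "mult_on n (\<lambda>i j. v i * cnj (v j)) w = (\<lambda>i. inner_on n v w * v i)" for w
    unfolding mult_on_def inner_on_def by (simp add: sum_distrib_left sum_distrib_right algebra_simps)
  have "opnorm_on n (\<lambda>i j. v i * cnj (v j)) \<le> 1"
  proof (rule opnorm_on_le[OF assms(1)])
    fix w assume "norm_on n w = 1"
    then show "norm_on n (mult_on n (\<lambda>i j. v i * cnj (v j)) w) \<le> 1"
      using inner_on_Cauchy_Schwarz[of n v w] assms(2) by (simp add: mult norm_on_scale)
  qed
  moreover have "1 \<le> opnorm_on n (\<lambda>i j. v i * cnj (v j))"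
    using norm_on_mult_le_opnorm_on[OF assms(2), of "\<lambda>i j. v i * cnj (v j)"] assms(2)
    by (simp add: mult norm_on_scale inner_on_self)
  ultimately show ?thesis by simp
qed

section \<open>Matrices, the spectral norm, and the quantities \<open>I(C)\<close> and \<open>I(sp,C)\<close>\<close>

abbreviation entries :: "'a mat \<Rightarrow> nat \<Rightarrow> nat \<Rightarrow> 'a" where
  "entries M \<equiv> \<lambda>i j. M $$ (i, j)"

lemma mult_mat_vec_index_eq_mult_on:
  "M \<in> carrier_mat n n \<Longrightarrow> v \<in> carrier_vec n \<Longrightarrow> i < n \<Longrightarrow>
    (M *\<^sub>v v) $ i = mult_on n (entries M) (vec_index v) i"
  unfolding mult_on_def by (simp add: scalar_prod_def Matrix.row_def atLeast0LessThan)

lemma quadratic_form_eq_form_on: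
  assumes "M \<in> carrier_mat n n" "v \<in> carrier_vec n"
  shows "conjugate v \<bullet> (M *\<^sub>v v) = form_on n (entries M) (vec_index v) (vec_index v)"
proof -
  have "conjugate v \<bullet> (M *\<^sub>v v) = (\<Sum>i<n. cnj (v $ i) * (M *\<^sub>v v) $ i)"
    using assms by (simp add: scalar_prod_def atLeast0LessThan)
  also have "\<dots> = inner_on n (vec_index v) (mult_on n (entries M) (vec_index v))"
    unfolding inner_on_def by (intro sum.cong refl) (simp only: mult_mat_vec_index_eq_mult_on[OF assms] lessThan_iff)
  finally show ?thesis
    by (simp add: form_on_eq_inner_on)
qed

lemma psd_iff_psd_on: "psd n M \<longleftrightarrow> M \<in> carrier_mat n n \<and> psd_on n (entries M)"
proof
  assume psd: "psd n M"
  then have M: "M \<in> carrier_mat n n"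
    unfolding psd_def by simp
  have "0 \<le> form_on n (entries M) x x" for x
  proof -
    have "0 \<le> conjugate (vec n x) \<bullet> (M *\<^sub>v vec n x)"
      using psd unfolding psd_def by simp
    also have "\<dots> = form_on n (entries M) x x"
      unfolding quadratic_form_eq_form_on[OF M vec_carrier] form_on_def by (intro sum.cong) auto
    finally show ?thesis .
  qed
  then show "M \<in> carrier_mat n n \<and> psd_on n (entries M)"
    using M unfolding psd_on_def by simp
next
  assume "M \<in> carrier_mat n n \<and> psd_on n (entries M)"
  then show "psd n M"
    unfolding psd_def psd_on_def using quadratic_form_eq_form_on[of M n] by auto
qed

lemma vnorm_eq_norm_on: "vnorm v = norm_on (dim_vec v) (vec_index v)"
  unfolding vnorm_def norm_on_def by simp

lemma spec_norm_eq_opnorm_on: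
  assumes M: "M \<in> carrier_mat n n"
  shows "spec_norm M = opnorm_on n (entries M)"
proof -
  have "vnorm (M *\<^sub>v v) = norm_on n (mult_on n (entries M) (vec_index v))" if v: "v \<in> carrier_vec n" for v
  proof -
    have "vnorm (M *\<^sub>v v) = norm_on n (vec_index (M *\<^sub>v v))"
      using M by (simp add: vnorm_eq_norm_on)
    also have "\<dots> = norm_on n (mult_on n (entries M) (vec_index v))"
      by (rule norm_on_cong) (rule mult_mat_vec_index_eq_mult_on[OF M v])
    finally show ?thesis .
  qed
  moreover have "norm_on n (mult_on n (entries M) x) = norm_on n (mult_on n (entries M) (vec_index (vec n x)))"
    and "norm_on n x = norm_on n (vec_index (vec n x))" for x
    by (auto simp: mult_on_def intro!: norm_on_cong sum.cong)
  ultimately have "{vnorm (M *\<^sub>v v) | v. v \<in> carrier_vec (dim_col M) \<and> vnorm v = 1}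
      = {norm_on n (mult_on n (entries M) x) | x. norm_on n x = 1}"
    using M by (auto simp: vnorm_eq_norm_on) (metis vec_carrier dim_vec)
  then show ?thesis
    unfolding spec_norm_def opnorm_on_def by simp
qed

lemma spec_norm_hadamard:
  assumes "A \<in> carrier_mat n n"
  shows "spec_norm (A \<circ>\<^sub>h B) = opnorm_on n (\<lambda>i j. A $$ (i, j) * B $$ (i, j))"
proof -
  have "A \<circ>\<^sub>h B \<in> carrier_mat n n"
    using assms unfolding hadamard_def by simp
  then have "spec_norm (A \<circ>\<^sub>h B) = opnorm_on n (entries (A \<circ>\<^sub>h B))"
    by (rule spec_norm_eq_opnorm_on)
  also have "\<dots> = opnorm_on n (\<lambda>i j. A $$ (i, j) * B $$ (i, j))"
    using assms by (intro opnorm_on_cong) (simp add: hadamard_def)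
  finally show ?thesis .
qed

lemma psd_minus_ones_mat_iff:
  assumes "psd n A"
  shows "psd n (A - complex_of_real t \<cdot>\<^sub>m ones_mat n)
    \<longleftrightarrow> (\<forall>x. t * (cmod (\<Sum>i<n. x i))\<^sup>2 \<le> Re (form_on n (entries A) x x))"
proof -
  have A: "A \<in> carrier_mat n n" "psd_on n (entries A)"
    using assms psd_iff_psd_on by auto
  have form: "form_on n (entries (A - complex_of_real t \<cdot>\<^sub>m ones_mat n)) x x
      = form_on n (entries A) x x - complex_of_real (t * (cmod (\<Sum>i<n. x i))\<^sup>2)" for x
  proof -
    have "form_on n (entries (A - complex_of_real t \<cdot>\<^sub>m ones_mat n)) x x
        = form_on n (\<lambda>i j. A $$ (i, j) - complex_of_real t) x x"
      using A(1) by (intro form_on_cong) (auto simp: ones_mat_def)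
    also have "\<dots> = form_on n (entries A) x x - complex_of_real (t * (cmod (\<Sum>i<n. x i))\<^sup>2)"
      unfolding form_on_diff form_on_const cnj_mult_self by simp
    finally show ?thesis .
  qed
  have "A - complex_of_real t \<cdot>\<^sub>m ones_mat n \<in> carrier_mat n n"
    unfolding ones_mat_def by (intro minus_carrier_mat smult_carrier_mat) simp
  then show ?thesis
    unfolding psd_iff_psd_on psd_on_def form less_eq_complex_def
    using psd_on_Im_form[OF A(2)] by auto
qed

lemma I_mat_eq_Sup:
  assumes "psd n A"
  shows "I_mat A = Sup {t. 0 \<le> t \<and> (\<forall>x. t * (cmod (\<Sum>i<n. x i))\<^sup>2 \<le> Re (form_on n (entries A) x x))}"
proof -
  have "dim_row A = n"
    using assms unfolding psd_def by auto
  then show ?thesis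
    unfolding I_mat_def using psd_minus_ones_mat_iff[OF assms] by simp
qed

lemma I_mat_le_form:
  assumes "psd n A"
  shows "I_mat A * (cmod (\<Sum>i<n. x i))\<^sup>2 \<le> Re (form_on n (entries A) x x)"
proof (cases "(\<Sum>i<n. x i) = 0")
  case True
  then show ?thesis
    using psd_on_Re_form_nonneg assms psd_iff_psd_on by auto
next
  case False
  then have pos: "(cmod (\<Sum>i<n. x i))\<^sup>2 > 0" by simp
  have "I_mat A \<le> Re (form_on n (entries A) x x) / (cmod (\<Sum>i<n. x i))\<^sup>2"
    unfolding I_mat_eq_Sup[OF assms]
  proof (rule cSup_least)
    show "{t. 0 \<le> t \<and> (\<forall>x. t * (cmod (\<Sum>i<n. x i))\<^sup>2 \<le> Re (form_on n (entries A) x x))} \<noteq> {}"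
      using psd_on_Re_form_nonneg assms psd_iff_psd_on by auto
  qed (use pos in \<open>auto simp: field_simps\<close>)
  then show ?thesis
    using pos by (simp add: field_simps)
qed

lemma I_mat_greatest:
  assumes "n > 0" "psd n A" "0 \<le> t"
    and "\<And>x. t * (cmod (\<Sum>i<n. x i))\<^sup>2 \<le> Re (form_on n (entries A) x x)"
  shows "t \<le> I_mat A"
  unfolding I_mat_eq_Sup[OF assms(2)]
proof (rule cSup_upper)
  show "bdd_above {t. 0 \<le> t \<and> (\<forall>x. t * (cmod (\<Sum>i<n. x i))\<^sup>2 \<le> Re (form_on n (entries A) x x))}"
  proof (rule bdd_aboveI)
    fix s
    assume "s \<in> {t. 0 \<le> t \<and> (\<forall>x. t * (cmod (\<Sum>i<n. x i))\<^sup>2 \<le> Re (form_on n (entries A) x x))}"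
    then have "s * (cmod (\<Sum>i<n. basis_fun 0 i))\<^sup>2 \<le> Re (form_on n (entries A) (basis_fun 0) (basis_fun 0))"
      by blast
    then show "s \<le> Re (A $$ (0, 0))"
      using assms(1) by (simp add: form_on_basis_fun sum_basis_fun)
  qed
qed (use assms in auto)

lemma I_sp_eq_Inf:
  assumes "A \<in> carrier_mat n n"
  shows "I_sp A = Inf {opnorm_on n (\<lambda>i j. A $$ (i, j) * B $$ (i, j)) | B. psd n B \<and> opnorm_on n (entries B) = 1}"
proof -
  have "psd n B \<Longrightarrow> spec_norm B = opnorm_on n (entries B)" for B
    using spec_norm_eq_opnorm_on psd_iff_psd_on by blast
  then show ?thesis
    using assms unfolding I_sp_def by (auto simp: spec_norm_hadamard intro!: arg_cong[where f=Inf])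
qed

lemma I_sp_le:
  assumes "n > 0" "A \<in> carrier_mat n n" "psd n B" "opnorm_on n (entries B) = 1"
  shows "I_sp A \<le> opnorm_on n (\<lambda>i j. A $$ (i, j) * B $$ (i, j))"
  unfolding I_sp_eq_Inf[OF assms(2)]
  by (rule cInf_lower) (use assms opnorm_on_nonneg in \<open>auto intro: bdd_belowI[of _ 0]\<close>)

lemma psd_rank1_mat: "psd n (mat n n (\<lambda>(i, j). v i * cnj (v j)))"
  unfolding psd_iff_psd_on by (auto intro: psd_on_cong[OF psd_on_rank1])

lemma opnorm_on_rank1_mat:
  "n > 0 \<Longrightarrow> norm_on n v = 1 \<Longrightarrow> opnorm_on n (entries (mat n n (\<lambda>(i, j). v i * cnj (v j)))) = 1"
  using opnorm_on_rank1 by (simp cong: opnorm_on_cong)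

lemma I_sp_greatest:
  assumes "n > 0" "A \<in> carrier_mat n n"
    and "\<And>B. psd n B \<Longrightarrow> opnorm_on n (entries B) = 1 \<Longrightarrow> c \<le> opnorm_on n (\<lambda>i j. A $$ (i, j) * B $$ (i, j))"
  shows "c \<le> I_sp A"
  unfolding I_sp_eq_Inf[OF assms(2)]
proof (rule cInf_greatest)
  let ?B = "mat n n (\<lambda>(i, j). basis_fun 0 i * cnj (basis_fun 0 j))"
  have "psd n ?B" "opnorm_on n (entries ?B) = 1"
    using psd_rank1_mat opnorm_on_rank1_mat[OF assms(1) norm_on_basis_fun[OF assms(1)]] by blast+
  then show "{opnorm_on n (\<lambda>i j. A $$ (i, j) * B $$ (i, j)) | B. psd n B \<and> opnorm_on n (entries B) = 1} \<noteq> {}"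
    by blast
qed (use assms(3) in blast)

section \<open>A lower bound for the norm of Hadamard products\<close>

definition std_simplex :: "nat \<Rightarrow> (nat \<Rightarrow> real) set" where
  "std_simplex n = {w. (\<forall>i<n. 0 \<le> w i) \<and> (\<Sum>i<n. w i) = 1}"

definition quad_on :: "nat \<Rightarrow> (nat \<Rightarrow> nat \<Rightarrow> real) \<Rightarrow> (nat \<Rightarrow> real) \<Rightarrow> real" where
  "quad_on n a y = (\<Sum>i<n. \<Sum>j<n. a i j * y i * y j)"

lemma Re_form_on_of_real:
  "Re (form_on n A (\<lambda>i. complex_of_real (y i)) (\<lambda>i. complex_of_real (y i))) = quad_on n (\<lambda>i j. Re (A i j)) y"
  unfolding form_on_def quad_on_def Re_sum by (simp add: mult_ac)

lemma Re_form_on_hadamard_rank1: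
  "Re (form_on n (\<lambda>i j. A i j * (z i * cnj (z j))) z z) = quad_on n (\<lambda>i j. Re (A i j)) (\<lambda>i. (cmod (z i))\<^sup>2)"
proof -
  have summand: "cnj (z i) * (A i j * (z i * cnj (z j))) * z j
      = A i j * complex_of_real ((cmod (z i))\<^sup>2 * (cmod (z j))\<^sup>2)" for i j
  proof -
    have "cnj (z i) * (A i j * (z i * cnj (z j))) * z j = A i j * ((cnj (z i) * z i) * (cnj (z j) * z j))"
      by (simp only: mult_ac)
    also have "\<dots> = A i j * complex_of_real ((cmod (z i))\<^sup>2 * (cmod (z j))\<^sup>2)"
      by (simp only: cnj_mult_self of_real_mult)
    finally show ?thesis .
  qed
  show ?thesis
    unfolding form_on_def summand quad_on_def Re_sum by (simp add: mult_ac)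
qed

lemma norm_on_mult_power2_le_form_on:
  assumes B: "psd_on n B" "opnorm_on n B \<le> 1"
  shows "(norm_on n (mult_on n B z))\<^sup>2 \<le> Re (form_on n B z z)"
proof (cases "norm_on n (mult_on n B z) = 0")
  case True
  then show ?thesis
    using psd_on_Re_form_nonneg[OF B(1)] by simp
next
  case False
  define v where "v = mult_on n B z"
  define a where "a = (norm_on n v)\<^sup>2"
  have "a > 0"
    using False unfolding a_def v_def by simp
  have "form_on n B v z = complex_of_real a"
    unfolding form_on_eq_inner_on v_def[symmetric] inner_on_self a_def ..
  then have "a * a \<le> Re (form_on n B v v) * Re (form_on n B z z)"
    using form_on_Cauchy_Schwarz[OF B(1), of v z] \<open>a > 0\<close> by (simp add: power2_eq_square)
  also have "\<dots> \<le> a * Re (form_on n B z z)"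
    using Re_form_on_le_opnorm_on[of n B v] B(2) psd_on_Re_form_nonneg[OF B(1)]
      mult_right_mono[OF B(2), of "(norm_on n v)\<^sup>2"]
    unfolding a_def by (intro mult_right_mono) auto
  finally have "a \<le> Re (form_on n B z z)"
    using \<open>a > 0\<close> by simp
  then show ?thesis
    unfolding a_def v_def .
qed

lemma square_sub_le_of_le_add:
  fixes p q x r :: real
  assumes "0 \<le> p" "p \<le> x + q" "x\<^sup>2 \<le> r"
  shows "p\<^sup>2 - 2 * p * q \<le> r"
proof (cases "p \<le> 2 * q")
  case True
  then have "p\<^sup>2 - 2 * p * q \<le> 0"
    using assms(1) by (simp add: power2_eq_square mult_left_mono algebra_simps)
  then show ?thesis
    using assms(3) zero_le_power2[of x] by linarith
next
  case False
  then have "(p - q)\<^sup>2 \<le> x\<^sup>2"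
    using assms by (intro power_mono) auto
  then show ?thesis
    using assms(3) power2_diff[of p q] zero_le_power2[of q] by linarith
qed

text \<open>A unit vector \<open>z\<close> that almost attains the norm of a psd contraction \<open>B\<close> is almost
  fixed by \<open>B\<close>, because \<open>\<parallel>B z\<parallel>\<^sup>2 \<le> z\<^sup>* B z\<close>. This replaces the use of a top eigenvector.\<close>

lemma norm_on_mult_sub_almost_fixed:
  assumes B: "psd_on n B" "opnorm_on n B \<le> 1"
    and z: "norm_on n z = 1" and \<eta>: "\<eta> > 0"
    and almost: "1 - \<eta>\<^sup>2 / 8 < norm_on n (mult_on n B z)"
  shows "2 * norm_on n (\<lambda>i. mult_on n B z i - z i) < \<eta>"
proof -
  define v where "v = mult_on n B z"
  have "(norm_on n (\<lambda>i. v i - z i))\<^sup>2 = (norm_on n v)\<^sup>2 - 2 * Re (form_on n B z z) + 1"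
    unfolding norm_on_diff_power2 z form_on_eq_inner_on v_def by simp
  also have "\<dots> \<le> 1 - (norm_on n v)\<^sup>2"
    using norm_on_mult_power2_le_form_on[OF B, of z] unfolding v_def by simp
  also have "\<dots> \<le> 2 * (1 - norm_on n v)"
    using zero_le_power2[of "1 - norm_on n v"] unfolding power2_diff by simp
  also have "\<dots> < (\<eta> / 2)\<^sup>2"
    using almost unfolding v_def by (simp add: power2_eq_square)
  finally show ?thesis
    using \<eta> norm_on_nonneg power2_less_imp_less[of "norm_on n (\<lambda>i. v i - z i)" "\<eta> / 2"]
    unfolding v_def by simp
qed

lemma form_on_sub_rank1_add_diag:
  "form_on n (\<lambda>i j. B i j - z i * cnj (z j) + (if i = j then complex_of_real \<eta> else 0)) w w
    = form_on n B w w - complex_of_real ((cmod (inner_on n z w))\<^sup>2) + complex_of_real (\<eta> * (norm_on n w)\<^sup>2)"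
proof -
  have "form_on n (\<lambda>i j. if i = j then complex_of_real \<eta> else 0) w w = complex_of_real \<eta> * inner_on n w w"
    unfolding form_on_diagonal inner_on_def sum_distrib_left by (simp add: mult_ac)
  then show ?thesis
    unfolding form_on_add form_on_diff form_on_rank1 inner_on_self
    by (simp add: inner_on_commute[of n w z] cnj_mult_self)
qed

lemma psd_on_sub_rank1_add_diag:
  assumes B: "psd_on n B" "opnorm_on n B \<le> 1"
    and z: "norm_on n z = 1" and \<eta>: "\<eta> > 0"
    and almost: "1 - \<eta>\<^sup>2 / 8 < norm_on n (mult_on n B z)"
  shows "psd_on n (\<lambda>i j. B i j - z i * cnj (z j) + (if i = j then complex_of_real \<eta> else 0))"
proof (rule psd_onI)
  define r where "r = (\<lambda>i. mult_on n B z i - z i)"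
  have r_small: "2 * norm_on n r < \<eta>"
    unfolding r_def by (rule norm_on_mult_sub_almost_fixed[OF B z \<eta> almost])
  fix w
  have "form_on n B z w = inner_on n z w + inner_on n r w"
    unfolding form_on_eq_inner_on_left[OF B(1)] r_def by (simp add: inner_on_add_left[symmetric])
  moreover have "(cmod (form_on n B z w))\<^sup>2 \<le> Re (form_on n B w w)"
  proof -
    have "(cmod (form_on n B z w))\<^sup>2 \<le> Re (form_on n B z z) * Re (form_on n B w w)"
      by (rule form_on_Cauchy_Schwarz[OF B(1)])
    also have "\<dots> \<le> 1 * Re (form_on n B w w)"
      using Re_form_on_le_opnorm_on[of n B z] B(2) z psd_on_Re_form_nonneg[OF B(1)]
      by (intro mult_right_mono) auto
    finally show ?thesis by simp
  qed
  ultimately have "(cmod (inner_on n z w))\<^sup>2 - 2 * cmod (inner_on n z w) * cmod (inner_on n r w)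
      \<le> Re (form_on n B w w)"
    using norm_triangle_ineq4[of "inner_on n z w + inner_on n r w" "inner_on n r w"]
    by (intro square_sub_le_of_le_add) auto
  moreover have "2 * cmod (inner_on n z w) * cmod (inner_on n r w) \<le> \<eta> * (norm_on n w)\<^sup>2"
  proof -
    have "2 * cmod (inner_on n z w) * cmod (inner_on n r w) \<le> 2 * norm_on n w * (norm_on n r * norm_on n w)"
      using inner_on_Cauchy_Schwarz[of n z w] inner_on_Cauchy_Schwarz[of n r w] z norm_on_nonneg[of n w]
      by (intro mult_mono) auto
    also have "\<dots> = (2 * norm_on n r) * (norm_on n w)\<^sup>2"
      by (simp add: power2_eq_square)
    also have "\<dots> \<le> \<eta> * (norm_on n w)\<^sup>2"
      using r_small by (intro mult_right_mono) auto
    finally show ?thesis .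
  qed
  ultimately show "Im (form_on n (\<lambda>i j. B i j - z i * cnj (z j) + (if i = j then complex_of_real \<eta> else 0)) w w) = 0
      \<and> 0 \<le> Re (form_on n (\<lambda>i j. B i j - z i * cnj (z j) + (if i = j then complex_of_real \<eta> else 0)) w w)"
    using psd_on_Im_form[OF B(1), of w] unfolding form_on_sub_rank1_add_diag by simp
qed

lemma Re_form_on_hadamard_diag_le:
  assumes A: "psd_on n A" and z: "norm_on n z = 1" and \<eta>: "0 \<le> \<eta>"
  shows "Re (form_on n (\<lambda>i j. A i j * (if i = j then complex_of_real \<eta> else 0)) z z) \<le> \<eta> * (\<Sum>i<n. Re (A i i))"
proof -
  have summand: "cnj (z i) * (A i i * complex_of_real \<eta>) * z i = complex_of_real \<eta> * A i i * (cnj (z i) * z i)" for i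
    by (simp only: mult_ac)
  have "form_on n (\<lambda>i j. A i j * (if i = j then complex_of_real \<eta> else 0)) z z
      = form_on n (\<lambda>i j. if i = j then A i i * complex_of_real \<eta> else 0) z z"
    by (intro form_on_cong) simp
  also have "\<dots> = (\<Sum>i<n. complex_of_real \<eta> * A i i * complex_of_real ((cmod (z i))\<^sup>2))"
    unfolding form_on_diagonal summand cnj_mult_self ..
  finally have "Re (form_on n (\<lambda>i j. A i j * (if i = j then complex_of_real \<eta> else 0)) z z)
      = \<eta> * (\<Sum>i<n. Re (A i i) * (cmod (z i))\<^sup>2)"
    by (simp add: sum_distrib_left mult_ac)
  also have "\<dots> \<le> \<eta> * (\<Sum>i<n. Re (A i i))"
    using \<eta> psd_on_Re_diag_nonneg[OF A] norm_le_norm_on[of _ n z] z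
    by (intro mult_left_mono sum_mono) (auto intro: mult_left_le simp: power_le_one)
  finally show ?thesis .
qed

theorem opnorm_on_hadamard_ge:
  assumes n: "n > 0" and A: "psd_on n A" and B: "psd_on n B" "opnorm_on n B = 1"
    and c: "\<And>w. w \<in> std_simplex n \<Longrightarrow> c \<le> quad_on n (\<lambda>i j. Re (A i j)) w"
  shows "c \<le> opnorm_on n (\<lambda>i j. A i j * B i j)"
proof (rule field_le_epsilon)
  fix e :: real
  assume "0 < e"
  define K where "K = (\<Sum>i<n. Re (A i i))"
  have "0 \<le> K"
    unfolding K_def using psd_on_Re_diag_nonneg[OF A] by (intro sum_nonneg) simp
  define \<eta> where "\<eta> = e / (K + 1)"
  have "\<eta> > 0" "\<eta> * K \<le> e"
    unfolding \<eta>_def using \<open>0 < e\<close> \<open>0 \<le> K\<close> by (simp_all add: field_simps)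
  obtain z where z: "norm_on n z = 1" "1 - \<eta>\<^sup>2 / 8 < norm_on n (mult_on n B z)"
    using opnorm_on_approx[OF n, of "\<eta>\<^sup>2 / 8" B] \<open>\<eta> > 0\<close> B(2) by auto
  define D :: "nat \<Rightarrow> nat \<Rightarrow> complex" where "D = (\<lambda>i j. if i = j then complex_of_real \<eta> else 0)"
  have "psd_on n (\<lambda>i j. A i j * (B i j - z i * cnj (z j) + D i j))"
    unfolding D_def using psd_on_sub_rank1_add_diag[OF B(1) _ z(1) \<open>\<eta> > 0\<close> z(2)] B(2)
    by (intro psd_on_hadamard[OF A]) simp
  then have "0 \<le> Re (form_on n (\<lambda>i j. A i j * (B i j - z i * cnj (z j) + D i j)) z z)"
    by (rule psd_on_Re_form_nonneg)
  also have "form_on n (\<lambda>i j. A i j * (B i j - z i * cnj (z j) + D i j)) z z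
      = form_on n (\<lambda>i j. A i j * B i j) z z - form_on n (\<lambda>i j. A i j * (z i * cnj (z j))) z z
        + form_on n (\<lambda>i j. A i j * D i j) z z"
    unfolding form_on_def by (simp add: algebra_simps sum.distrib sum_subtractf)
  finally have "0 \<le> Re (form_on n (\<lambda>i j. A i j * B i j) z z)
      - Re (form_on n (\<lambda>i j. A i j * (z i * cnj (z j))) z z) + Re (form_on n (\<lambda>i j. A i j * D i j) z z)"
    by simp
  moreover have "c \<le> Re (form_on n (\<lambda>i j. A i j * (z i * cnj (z j))) z z)"
  proof -
    have "(\<lambda>i. (cmod (z i))\<^sup>2) \<in> std_simplex n"
      using norm_on_power2[of n z] z(1) unfolding std_simplex_def by simp
    then show ?thesis
      unfolding Re_form_on_hadamard_rank1 by (rule c)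
  qed
  moreover have "Re (form_on n (\<lambda>i j. A i j * B i j) z z) \<le> opnorm_on n (\<lambda>i j. A i j * B i j)"
    using Re_form_on_le_opnorm_on[of n _ z] z(1) by simp
  moreover have "Re (form_on n (\<lambda>i j. A i j * D i j) z z) \<le> \<eta> * K"
    unfolding D_def K_def using Re_form_on_hadamard_diag_le[OF A z(1)] \<open>\<eta> > 0\<close> by simp
  ultimately show "c \<le> opnorm_on n (\<lambda>i j. A i j * B i j) + e"
    using \<open>\<eta> * K \<le> e\<close> by linarith
qed

corollary I_mat_le_I_sp:
  assumes "n > 0" "psd n A"
  shows "I_mat A \<le> I_sp A"
proof -
  have A: "A \<in> carrier_mat n n" "psd_on n (entries A)"
    using assms(2) psd_iff_psd_on by auto
  have "I_mat A \<le> quad_on n (\<lambda>i j. Re (A $$ (i, j))) w" if "w \<in> std_simplex n" for w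
    using I_mat_le_form[OF assms(2), of "\<lambda>i. complex_of_real (w i)"] that
    unfolding std_simplex_def Re_form_on_of_real by (simp flip: of_real_sum)
  then show ?thesis
    using psd_iff_psd_on by (intro I_sp_greatest[OF assms(1) A(1)] opnorm_on_hadamard_ge[OF assms(1) A(2)]) auto
qed

section \<open>The case of a nonnegative solution of \<open>A u = p\<close>\<close>

lemma weighted_Cauchy_Schwarz:
  fixes c p q :: "nat \<Rightarrow> real"
  assumes "\<And>j. j < n \<Longrightarrow> 0 \<le> c j"
  shows "(\<Sum>j<n. c j * \<bar>p j\<bar> * \<bar>q j\<bar>)\<^sup>2 \<le> (\<Sum>j<n. c j * (p j)\<^sup>2) * (\<Sum>j<n. c j * (q j)\<^sup>2)"
proof -
  have "(\<Sum>j<n. c j * \<bar>p j\<bar> * \<bar>q j\<bar>) = (\<Sum>j<n. \<bar>sqrt (c j) * p j\<bar> * \<bar>sqrt (c j) * q j\<bar>)"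
    using assms by (intro sum.cong refl) (simp add: abs_mult real_sqrt_mult[symmetric])
  also have "\<dots> \<le> L2_set (\<lambda>j. sqrt (c j) * p j) {..<n} * L2_set (\<lambda>j. sqrt (c j) * q j) {..<n}"
    by (rule L2_set_mult_ineq)
  finally have "(\<Sum>j<n. c j * \<bar>p j\<bar> * \<bar>q j\<bar>)\<^sup>2
      \<le> (L2_set (\<lambda>j. sqrt (c j) * p j) {..<n} * L2_set (\<lambda>j. sqrt (c j) * q j) {..<n})\<^sup>2"
    using assms by (intro power_mono) (auto intro: sum_nonneg)
  also have "\<dots> = (\<Sum>j<n. c j * (p j)\<^sup>2) * (\<Sum>j<n. c j * (q j)\<^sup>2)"
    unfolding power_mult_distrib L2_set_def using assms
    by (subst real_sqrt_pow2, (intro sum_nonneg; simp))+ (simp add: power_mult_distrib)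
  finally show ?thesis .
qed

lemma cmod_mult_on_weighted_rank1_le:
  fixes a :: "nat \<Rightarrow> nat \<Rightarrow> real" and x :: "nat \<Rightarrow> real"
  assumes a: "\<And>j. j < n \<Longrightarrow> 0 \<le> a i j" and x: "\<And>j. j < n \<Longrightarrow> 0 \<le> x j" and i: "i < n"
  shows "(cmod (mult_on n (\<lambda>i j. complex_of_real (a i j * x i * x j)) v i))\<^sup>2
    \<le> (x i)\<^sup>2 * ((\<Sum>j<n. a i j * (x j)\<^sup>2) * (\<Sum>j<n. a i j * (cmod (v j))\<^sup>2))"
proof -
  have "cmod (mult_on n (\<lambda>i j. complex_of_real (a i j * x i * x j)) v i)
      \<le> (\<Sum>j<n. cmod (complex_of_real (a i j * x i * x j) * v j))"
    unfolding mult_on_def by (rule norm_sum)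
  also have "\<dots> = x i * (\<Sum>j<n. a i j * \<bar>x j\<bar> * \<bar>cmod (v j)\<bar>)"
    unfolding sum_distrib_left using a x i by (intro sum.cong refl) (simp add: norm_mult abs_mult)
  finally have "(cmod (mult_on n (\<lambda>i j. complex_of_real (a i j * x i * x j)) v i))\<^sup>2
      \<le> (x i * (\<Sum>j<n. a i j * \<bar>x j\<bar> * \<bar>cmod (v j)\<bar>))\<^sup>2"
    by (rule power_mono) simp
  also have "\<dots> = (x i)\<^sup>2 * (\<Sum>j<n. a i j * \<bar>x j\<bar> * \<bar>cmod (v j)\<bar>)\<^sup>2"
    by (rule power_mult_distrib)
  also have "\<dots> \<le> (x i)\<^sup>2 * ((\<Sum>j<n. a i j * (x j)\<^sup>2) * (\<Sum>j<n. a i j * (cmod (v j))\<^sup>2))"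
    using a by (intro mult_left_mono weighted_Cauchy_Schwarz) auto
  finally show ?thesis .
qed

theorem opnorm_on_Schur_test:
  fixes a :: "nat \<Rightarrow> nat \<Rightarrow> real" and x :: "nat \<Rightarrow> real"
  assumes n: "n > 0"
    and a: "\<And>i j. i < n \<Longrightarrow> j < n \<Longrightarrow> 0 \<le> a i j" "\<And>i j. i < n \<Longrightarrow> j < n \<Longrightarrow> a j i = a i j"
    and x: "\<And>i. i < n \<Longrightarrow> 0 \<le> x i"
    and rows: "\<And>i. i < n \<Longrightarrow> (\<Sum>j<n. a i j * (x j)\<^sup>2) = r"
  shows "opnorm_on n (\<lambda>i j. complex_of_real (a i j * x i * x j)) \<le> r"
proof (rule opnorm_on_le[OF n])
  let ?M = "\<lambda>i j. complex_of_real (a i j * x i * x j)"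
  have "0 \<le> (\<Sum>j<n. a 0 j * (x j)\<^sup>2)"
    using a(1) n by (intro sum_nonneg) simp
  then have "0 \<le> r"
    using rows[OF n] by simp
  fix v
  assume v: "norm_on n v = 1"
  have row_bound: "(cmod (mult_on n ?M v i))\<^sup>2 \<le> r * ((x i)\<^sup>2 * (\<Sum>j<n. a i j * (cmod (v j))\<^sup>2))"
    if "i < n" for i
    using cmod_mult_on_weighted_rank1_le[of n a i x v] a(1) x that rows[OF that] by (simp add: mult_ac)
  have "(norm_on n (mult_on n ?M v))\<^sup>2 \<le> r * (\<Sum>i<n. \<Sum>j<n. (x i)\<^sup>2 * a i j * (cmod (v j))\<^sup>2)"
    unfolding norm_on_power2 sum_distrib_left
    using row_bound by (intro sum_mono) (simp add: sum_distrib_left mult_ac)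
  also have "\<dots> = r * (\<Sum>j<n. (cmod (v j))\<^sup>2 * (\<Sum>i<n. a j i * (x i)\<^sup>2))"
    by (subst sum.swap) (auto intro!: arg_cong[where f="\<lambda>t. r * t"] sum.cong simp: sum_distrib_left a(2) mult_ac)
  also have "\<dots> = r * r"
    using rows v by (simp add: norm_on_power2[symmetric] sum_distrib_right[symmetric])
  finally have "(norm_on n (mult_on n ?M v))\<^sup>2 \<le> r\<^sup>2"
    by (simp add: power2_eq_square)
  then show "norm_on n (mult_on n ?M v) \<le> r"
    using \<open>0 \<le> r\<close> by (rule power2_le_imp_le)
qed

lemma I_mat_eq_of_solution:
  assumes n: "n > 0" and A: "psd n A"
    and sol: "\<And>i. i < n \<Longrightarrow> (\<Sum>j<n. A $$ (i, j) * complex_of_real (u j)) = 1"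
  shows "0 < (\<Sum>i<n. u i)" and "I_mat A = 1 / (\<Sum>i<n. u i)"
proof -
  define s where "s = (\<Sum>i<n. u i)"
  define U where "U = (\<lambda>i. complex_of_real (u i))"
  have psd_A: "psd_on n (entries A)"
    using A psd_iff_psd_on by auto
  have form_U: "form_on n (entries A) U x = (\<Sum>i<n. x i)" for x
  proof -
    have "form_on n (entries A) U x = inner_on n (\<lambda>_. 1) x"
      unfolding form_on_eq_inner_on_left[OF psd_A]
      by (rule inner_on_cong) (simp_all add: mult_on_def U_def sol)
    then show ?thesis
      by (simp add: inner_on_def)
  qed
  have form_UU: "form_on n (entries A) U U = complex_of_real s"
    using form_U[of U] unfolding s_def U_def by simp
  have CS: "(cmod (\<Sum>i<n. x i))\<^sup>2 \<le> s * Re (form_on n (entries A) x x)" for x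
    using form_on_Cauchy_Schwarz[OF psd_A, of U x] form_UU form_U[of x] by simp
  have "1 \<le> s * Re (A $$ (0, 0))"
    using CS[of "basis_fun 0"] n by (simp add: sum_basis_fun form_on_basis_fun)
  moreover have "0 \<le> s"
    using psd_on_Re_form_nonneg[OF psd_A, of U] unfolding form_UU by simp
  ultimately show "0 < (\<Sum>i<n. u i)"
    unfolding s_def[symmetric] by (cases "s = 0") auto
  then have "s > 0"
    unfolding s_def .
  have "1 / s \<le> I_mat A"
    using CS \<open>s > 0\<close> by (intro I_mat_greatest[OF n A]) (simp_all add: field_simps)
  moreover have "I_mat A * s\<^sup>2 \<le> s"
    using I_mat_le_form[OF A, of U] form_UU \<open>s > 0\<close> unfolding U_def s_def
    by (simp flip: of_real_sum)
  then have "I_mat A \<le> 1 / s"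
    using \<open>s > 0\<close> by (simp add: power2_eq_square field_simps)
  ultimately show "I_mat A = 1 / (\<Sum>i<n. u i)"
    unfolding s_def by simp
qed

lemma psd_nonneg_entries:
  assumes "psd n A" "\<forall>i<n. \<forall>j<n. 0 \<le> A $$ (i, j)" "i < n" "j < n"
  shows "A $$ (i, j) = complex_of_real (Re (A $$ (i, j)))"
    and "0 \<le> Re (A $$ (i, j))"
    and "A $$ (j, i) = A $$ (i, j)"
proof -
  show real: "A $$ (i, j) = complex_of_real (Re (A $$ (i, j)))"
    using assms(2-4) by (simp add: less_eq_complex_def complex_eq_iff)
  show "0 \<le> Re (A $$ (i, j))"
    using assms(2-4) by (simp add: less_eq_complex_def)
  have "psd_on n (entries A)"
    using assms(1) psd_iff_psd_on by blast
  then show "A $$ (j, i) = A $$ (i, j)"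
    using psd_on_hermitian[of n "entries A" i j] assms(3,4) real by (metis complex_cnj_complex_of_real)
qed

lemma sqrt_solution_power2:
  assumes n: "n > 0" and A: "psd n A" and u: "\<And>i. i < n \<Longrightarrow> 0 \<le> u i"
    and sol: "\<And>i. i < n \<Longrightarrow> (\<Sum>j<n. A $$ (i, j) * complex_of_real (u j)) = 1"
    and i: "i < n"
  shows "(sqrt (I_mat A * u i))\<^sup>2 = u i / (\<Sum>i<n. u i)"
  using I_mat_eq_of_solution[OF n A sol] u[OF i] by simp

lemma norm_on_sqrt_solution:
  assumes n: "n > 0" and A: "psd n A" and u: "\<And>i. i < n \<Longrightarrow> 0 \<le> u i"
    and sol: "\<And>i. i < n \<Longrightarrow> (\<Sum>j<n. A $$ (i, j) * complex_of_real (u j)) = 1"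
  shows "norm_on n (\<lambda>i. complex_of_real (sqrt (I_mat A * u i))) = 1"
  using I_mat_eq_of_solution(1)[OF n A sol]
  by (simp add: norm_on_def sqrt_solution_power2[OF n A u sol] sum_divide_distrib[symmetric])

text \<open>The Schur test with weights \<open>x\<^sub>i = (I(A) u\<^sub>i)\<^sup>1\<^sup>/\<^sup>2\<close>, whose row sums are \<open>I(A) (A u)\<^sub>i = I(A)\<close>.\<close>

lemma opnorm_on_hadamard_sqrt_solution_le:
  assumes n: "n > 0" and A: "psd n A" and nonneg: "\<forall>i<n. \<forall>j<n. 0 \<le> A $$ (i, j)"
    and u: "\<And>i. i < n \<Longrightarrow> 0 \<le> u i"
    and sol: "\<And>i. i < n \<Longrightarrow> (\<Sum>j<n. A $$ (i, j) * complex_of_real (u j)) = 1"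
  defines "x \<equiv> \<lambda>i. sqrt (I_mat A * u i)"
  shows "opnorm_on n (\<lambda>i j. A $$ (i, j) * complex_of_real (x i * x j)) \<le> I_mat A"
proof -
  define a where "a = (\<lambda>i j. Re (A $$ (i, j)))"
  have A_eq: "A $$ (i, j) = complex_of_real (a i j)" if "i < n" "j < n" for i j
    unfolding a_def by (rule psd_nonneg_entries(1)[OF A nonneg that])
  have x_sq: "(x j)\<^sup>2 = u j / (\<Sum>i<n. u i)" if "j < n" for j
    unfolding x_def by (rule sqrt_solution_power2[OF n A u sol that])
  have rows: "(\<Sum>j<n. a i j * (x j)\<^sup>2) = I_mat A" if "i < n" for i
  proof -
    have "complex_of_real (\<Sum>j<n. a i j * u j) = 1"
      using sol[OF that] A_eq that by simp
    then have "(\<Sum>j<n. a i j * u j) = 1"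
      using of_real_eq_1_iff by blast
    then show ?thesis
      using I_mat_eq_of_solution(2)[OF n A sol] by (simp add: x_sq sum_divide_distrib[symmetric])
  qed
  have "opnorm_on n (\<lambda>i j. A $$ (i, j) * complex_of_real (x i * x j))
      = opnorm_on n (\<lambda>i j. complex_of_real (a i j * x i * x j))"
    using A_eq by (intro opnorm_on_cong) (simp add: mult.assoc)
  also have "\<dots> \<le> I_mat A"
    using psd_nonneg_entries(2,3)[OF A nonneg] rows u I_mat_eq_of_solution[OF n A sol] unfolding a_def
    by (intro opnorm_on_Schur_test[OF n]) (simp_all add: x_def)
  finally show ?thesis .
qed

theorem I_sp_eq_I_mat_of_solution:
  assumes n: "n > 0" and A: "psd n A" and nonneg: "\<forall>i<n. \<forall>j<n. 0 \<le> A $$ (i, j)"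
    and u: "\<And>i. i < n \<Longrightarrow> 0 \<le> u i"
    and sol: "\<And>i. i < n \<Longrightarrow> (\<Sum>j<n. A $$ (i, j) * complex_of_real (u j)) = 1"
  defines "x \<equiv> \<lambda>i. sqrt (I_mat A * u i)"
  shows "opnorm_on n (\<lambda>i j. A $$ (i, j) * complex_of_real (x i * x j)) = I_mat A"
    and "I_sp A = I_mat A"
proof -
  let ?B = "mat n n (\<lambda>(i, j). complex_of_real (x i) * cnj (complex_of_real (x j)))"
  have norm_x: "norm_on n (\<lambda>i. complex_of_real (x i)) = 1"
    unfolding x_def by (rule norm_on_sqrt_solution[OF n A u sol])
  have "A \<in> carrier_mat n n"
    using A unfolding psd_def by simp
  then have "I_sp A \<le> opnorm_on n (\<lambda>i j. A $$ (i, j) * ?B $$ (i, j))"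
    by (rule I_sp_le[OF n _ psd_rank1_mat opnorm_on_rank1_mat[OF n norm_x]])
  also have "\<dots> = opnorm_on n (\<lambda>i j. A $$ (i, j) * complex_of_real (x i * x j))"
    by (intro opnorm_on_cong) simp
  finally have "I_sp A \<le> opnorm_on n (\<lambda>i j. A $$ (i, j) * complex_of_real (x i * x j))" .
  moreover have "opnorm_on n (\<lambda>i j. A $$ (i, j) * complex_of_real (x i * x j)) \<le> I_mat A"
    unfolding x_def by (rule opnorm_on_hadamard_sqrt_solution_le[OF n A nonneg u sol])
  ultimately show "opnorm_on n (\<lambda>i j. A $$ (i, j) * complex_of_real (x i * x j)) = I_mat A"
    and "I_sp A = I_mat A"
    using I_mat_le_I_sp[OF n A] by linarith+
qed

section \<open>The converse: a solution of \<open>A u = p\<close> from \<open>I(sp,A) = I(A)\<close>\<close>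

lemma std_simplex_attains_min:
  fixes f :: "(nat \<Rightarrow> real) \<Rightarrow> real"
  assumes cont: "continuous_on UNIV f" and n: "n > 0"
    and local: "\<And>y z. (\<And>i. i < n \<Longrightarrow> y i = z i) \<Longrightarrow> f y = f z"
  obtains y where "y \<in> std_simplex n" "\<And>z. z \<in> std_simplex n \<Longrightarrow> f y \<le> f z"
proof -
  define S where "S = (PiE UNIV (\<lambda>i. if i < n then {0..1::real} else {0})) \<inter> {y. (\<Sum>i<n. y i) = 1}"
  have "compactin (product_topology (\<lambda>i. euclidean) UNIV) (PiE UNIV (\<lambda>i. if i < n then {0..1::real} else {0}))"
    by (subst compactin_PiE) auto
  moreover have "closed {y :: nat \<Rightarrow> real. (\<Sum>i<n. y i) = 1}"
    by (intro closed_Collect_eq continuous_intros) auto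
  ultimately have "compact S"
    unfolding S_def by (intro compact_Int_closed) (simp_all add: euclidean_product_topology)
  moreover have "(\<lambda>i. if i = 0 then 1 else 0) \<in> S"
    using n unfolding S_def by (auto simp: PiE_def extensional_def)
  ultimately obtain y where y: "y \<in> S" "\<And>z. z \<in> S \<Longrightarrow> f y \<le> f z"
    using continuous_attains_inf[of S f] continuous_on_subset[OF cont] by blast
  show thesis
  proof
    show "y \<in> std_simplex n"
      using y(1) unfolding S_def std_simplex_def by (auto simp: PiE_def Pi_def split: if_splits)
  next
    fix z
    assume z: "z \<in> std_simplex n"
    let ?z = "\<lambda>i. if i < n then z i else 0"
    have "z i \<le> 1" if "i < n" for i
      using z that member_le_sum[of i "{..<n}" z] unfolding std_simplex_def by auto
    then have "?z \<in> S"
      using z unfolding S_def std_simplex_def by (auto simp: PiE_def extensional_def)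
    then show "f y \<le> f z"
      using y(2)[of ?z] local[of ?z z] by simp
  qed
qed

lemma quad_on_attains_min:
  assumes "n > 0"
  obtains y where "y \<in> std_simplex n" "\<And>w. w \<in> std_simplex n \<Longrightarrow> quad_on n a y \<le> quad_on n a w"
proof -
  have "continuous_on UNIV (quad_on n a)"
    unfolding quad_on_def by (intro continuous_intros) auto
  moreover have "quad_on n a y = quad_on n a z" if "\<And>i. i < n \<Longrightarrow> y i = z i" for y z
    unfolding quad_on_def using that by (intro sum.cong) auto
  ultimately show thesis
    using std_simplex_attains_min[OF _ assms] that by blast
qed

lemma std_simplex_pos_entry:
  assumes "y \<in> std_simplex n"
  obtains k where "k < n" "0 < y k"
proof -
  have "\<exists>k<n. y k \<noteq> 0"
  proof (rule ccontr)
    assume "\<not> (\<exists>k<n. y k \<noteq> 0)"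
    then have "(\<Sum>i<n. y i) = 0" by simp
    then show False
      using assms unfolding std_simplex_def by simp
  qed
  then obtain k where "k < n" "y k \<noteq> 0" by blast
  moreover have "0 \<le> y k"
    using assms \<open>k < n\<close> unfolding std_simplex_def by simp
  ultimately show thesis
    using that by simp
qed

lemma quad_on_ge_diag:
  assumes "\<And>i j. i < n \<Longrightarrow> j < n \<Longrightarrow> 0 \<le> a i j" "\<And>i. i < n \<Longrightarrow> 0 \<le> y i" "k < n"
  shows "a k k * y k * y k \<le> quad_on n a y"
proof -
  have "a k k * y k * y k \<le> (\<Sum>j<n. a k j * y k * y j)"
    using assms by (intro member_le_sum[of k "{..<n}" "\<lambda>j. a k j * y k * y j"]) auto
  also have "\<dots> \<le> quad_on n a y"
    unfolding quad_on_def using assms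
    by (intro member_le_sum[of k "{..<n}" "\<lambda>i. \<Sum>j<n. a i j * y i * y j"] sum_nonneg) auto
  finally show ?thesis .
qed

lemma quad_on_pos:
  assumes nonneg: "\<forall>i<n. \<forall>j<n. 0 \<le> A $$ (i, j)" and diag: "\<forall>i<n. A $$ (i, i) \<noteq> 0"
    and y: "y \<in> std_simplex n"
  shows "0 < quad_on n (\<lambda>i j. Re (A $$ (i, j))) y"
proof -
  obtain k where k: "k < n" "0 < y k"
    using std_simplex_pos_entry[OF y] by blast
  have "Re (A $$ (k, k)) \<noteq> 0" "0 \<le> Re (A $$ (k, k))"
    using diag nonneg k(1) by (auto simp: less_eq_complex_def complex_eq_iff)
  then have "0 < Re (A $$ (k, k)) * y k * y k"
    using k(2) by simp
  also have "\<dots> \<le> quad_on n (\<lambda>i j. Re (A $$ (i, j))) y"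
    using nonneg y k unfolding std_simplex_def
    by (intro quad_on_ge_diag) (auto simp: less_eq_complex_def)
  finally show ?thesis .
qed

lemma psd_on_sub_const_of_le_I_mat:
  assumes A: "psd n A" and m: "m \<le> I_mat A"
  shows "psd_on n (\<lambda>i j. A $$ (i, j) - complex_of_real m)"
proof -
  have "psd n (A - complex_of_real m \<cdot>\<^sub>m ones_mat n)"
    unfolding psd_minus_ones_mat_iff[OF A]
  proof
    fix x :: "nat \<Rightarrow> complex"
    have "m * (cmod (\<Sum>i<n. x i))\<^sup>2 \<le> I_mat A * (cmod (\<Sum>i<n. x i))\<^sup>2"
      using m by (rule mult_right_mono) simp
    also have "\<dots> \<le> Re (form_on n (entries A) x x)"
      by (rule I_mat_le_form[OF A])
    finally show "m * (cmod (\<Sum>i<n. x i))\<^sup>2 \<le> Re (form_on n (entries A) x x)" .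
  qed
  moreover have "A \<in> carrier_mat n n"
    using A unfolding psd_def by simp
  ultimately show ?thesis
    unfolding psd_iff_psd_on by (auto elim!: psd_on_cong simp: ones_mat_def)
qed

lemma form_on_eq_0_of_Re_form_self_eq_0:
  assumes "psd_on n F" "Re (form_on n F x x) = 0"
  shows "form_on n F x y = 0"
  using form_on_Cauchy_Schwarz[OF assms(1), of x y] assms(2) by simp

lemma mult_eq_of_min_le_I_mat:
  assumes A: "psd n A" and nonneg: "\<forall>i<n. \<forall>j<n. 0 \<le> A $$ (i, j)"
    and y: "y \<in> std_simplex n" and m: "m = quad_on n (\<lambda>i j. Re (A $$ (i, j))) y" "m \<le> I_mat A"
    and i: "i < n"
  shows "(\<Sum>j<n. A $$ (i, j) * complex_of_real (y j)) = complex_of_real m"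
proof -
  define G where "G = (\<lambda>i j. A $$ (i, j) - complex_of_real m)"
  have psd_G: "psd_on n G"
    unfolding G_def by (rule psd_on_sub_const_of_le_I_mat[OF A m(2)])
  define Y where "Y = (\<lambda>i. complex_of_real (y i))"
  have sum_Y: "(\<Sum>i<n. Y i) = 1"
    using y unfolding Y_def std_simplex_def by (simp flip: of_real_sum)
  have "Re (form_on n G Y Y) = 0"
    unfolding G_def form_on_diff form_on_const sum_Y
    using Re_form_on_of_real[of n "entries A" y] by (simp add: Y_def m(1))
  then have "(\<Sum>j<n. A $$ (j, i) * complex_of_real (y j)) = complex_of_real m"
    using form_on_eq_0_of_Re_form_self_eq_0[OF psd_G, of Y "basis_fun i"] i sum_Y
    unfolding form_on_basis_fun_right[OF i] G_def
    by (simp add: Y_def algebra_simps sum_subtractf sum_distrib_left[symmetric])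
  then show ?thesis
    using psd_nonneg_entries(3)[OF A nonneg i] by simp
qed

theorem solution_of_I_sp_eq_I_mat:
  assumes n: "n > 0" and A: "psd n A" and nonneg: "\<forall>i<n. \<forall>j<n. 0 \<le> A $$ (i, j)"
    and diag: "\<forall>i<n. A $$ (i, i) \<noteq> 0" and eq: "I_sp A = I_mat A"
  obtains u where "\<And>i. i < n \<Longrightarrow> 0 \<le> u i" "\<And>i. i < n \<Longrightarrow> (\<Sum>j<n. A $$ (i, j) * complex_of_real (u j)) = 1"
proof -
  have A': "A \<in> carrier_mat n n" "psd_on n (entries A)"
    using A psd_iff_psd_on by auto
  obtain y where y: "y \<in> std_simplex n"
    and y_min: "\<And>w. w \<in> std_simplex n \<Longrightarrow> quad_on n (\<lambda>i j. Re (A $$ (i, j))) y \<le> quad_on n (\<lambda>i j. Re (A $$ (i, j))) w"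
    using quad_on_attains_min[OF n] by blast
  define m where "m = quad_on n (\<lambda>i j. Re (A $$ (i, j))) y"
  have "m \<le> I_mat A"
    unfolding eq[symmetric] m_def using y_min psd_iff_psd_on
    by (intro I_sp_greatest[OF n A'(1)] opnorm_on_hadamard_ge[OF n A'(2)]) auto
  note Ay = mult_eq_of_min_le_I_mat[OF A nonneg y m_def this]
  have "m > 0"
    unfolding m_def by (rule quad_on_pos[OF nonneg diag y])
  show thesis
  proof
    show "0 \<le> y i / m" if "i < n" for i
      using y \<open>m > 0\<close> that unfolding std_simplex_def by simp
    show "(\<Sum>j<n. A $$ (i, j) * complex_of_real (y j / m)) = 1" if "i < n" for i
      using Ay[OF that] \<open>m > 0\<close> by (simp add: sum_divide_distrib[symmetric])
  qed
qed

section \<open>Principal submatrices\<close>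

lemma bij_betw_pick: "finite J \<Longrightarrow> bij_betw (pick J) {..<card J} J"
proof (rule bij_betw_byWitness[where f' = "\<lambda>i. card {a \<in> J. a < i}"])
  assume "finite J"
  show "\<forall>k\<in>{..<card J}. card {a \<in> J. a < pick J k} = k"
  proof
    fix k
    assume "k \<in> {..<card J}"
    then have "k < card J" by simp
    then show "card {a \<in> J. a < pick J k} = k"
      by (rule card_pick_le)
  qed
  show "\<forall>i\<in>J. pick J (card {a \<in> J. a < i}) = i"
  proof
    fix i
    assume "i \<in> J"
    then show "pick J (card {a \<in> J. a < i}) = i"
      by (rule pick_card_in_set)
  qed
  show "pick J ` {..<card J} \<subseteq> J"
  proof
    fix j
    assume "j \<in> pick J ` {..<card J}"
    then obtain k where "k < card J" "j = pick J k" by blast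
    then show "j \<in> J"
      using pick_in_set_le[of k J] by simp
  qed
  show "(\<lambda>i. card {a \<in> J. a < i}) ` J \<subseteq> {..<card J}"
  proof
    fix k
    assume "k \<in> (\<lambda>i. card {a \<in> J. a < i}) ` J"
    then obtain i where i: "i \<in> J" and k: "k = card {a \<in> J. a < i}" by blast
    have "i \<notin> {a \<in> J. a < i}" by simp
    with i have "{a \<in> J. a < i} \<subset> J" by blast
    then have "card {a \<in> J. a < i} < card J"
      by (rule psubset_card_mono[OF \<open>finite J\<close>])
    then show "k \<in> {..<card J}"
      using k by simp
  qed
qed

lemma sum_pick:
  assumes "J \<subseteq> {..<n}" "\<And>i. i < n \<Longrightarrow> i \<notin> J \<Longrightarrow> h i = 0"
  shows "(\<Sum>i<n. h i) = (\<Sum>k<card J. h (pick J k))"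
proof -
  have "finite J"
    using assms(1) finite_subset by blast
  have "(\<Sum>i<n. h i) = (\<Sum>i\<in>J. h i)"
    using assms by (intro sum.mono_neutral_right) auto
  also have "\<dots> = (\<Sum>k<card J. h (pick J k))"
    using sum.reindex_bij_betw[OF bij_betw_pick[OF \<open>finite J\<close>], of h] by simp
  finally show ?thesis .
qed

lemma submatrix_carrier_index:
  assumes "A \<in> carrier_mat n n" "J \<subseteq> {..<n}"
  shows "submatrix A J J \<in> carrier_mat (card J) (card J)"
    and "\<And>k l. k < card J \<Longrightarrow> l < card J \<Longrightarrow> submatrix A J J $$ (k, l) = A $$ (pick J k, pick J l)"
proof -
  have rows: "{i. i < dim_row A \<and> i \<in> J} = J" and cols: "{j. j < dim_col A \<and> j \<in> J} = J"
    using assms by auto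
  have "dim_row (submatrix A J J) = card J" "dim_col (submatrix A J J) = card J"
    unfolding dim_submatrix rows cols by simp_all
  then show "submatrix A J J \<in> carrier_mat (card J) (card J)"
    by (rule carrier_matI)
  show "submatrix A J J $$ (k, l) = A $$ (pick J k, pick J l)" if "k < card J" "l < card J" for k l
    by (rule submatrix_index) (simp_all only: rows cols that)
qed

lemma pick_less:
  assumes "J \<subseteq> {..<n}" "k < card J"
  shows "pick J k < n"
  using pick_in_set_le[OF assms(2)] assms(1) by auto

lemma psd_submatrix:
  assumes A: "psd n A" and J: "J \<subseteq> {..<n}"
  shows "psd (card J) (submatrix A J J)"
proof -
  have A': "A \<in> carrier_mat n n" "psd_on n (entries A)"
    using A psd_iff_psd_on by auto
  note sub = submatrix_carrier_index[OF A'(1) J]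
  have "psd_on (card J) (entries (submatrix A J J))"
  proof (rule psd_onI)
    fix x :: "nat \<Rightarrow> complex"
    define x' where "x' = (\<lambda>i. if i \<in> J then x (card {a \<in> J. a < i}) else 0)"
    have x'_pick: "x' (pick J k) = x k" if "k < card J" for k
      using pick_in_set_le[OF that] card_pick_le[OF that] unfolding x'_def by simp
    have "form_on n (entries A) x' x' = (\<Sum>k<card J. \<Sum>j<n. cnj (x' (pick J k)) * A $$ (pick J k, j) * x' j)"
      unfolding form_on_def by (rule sum_pick[OF J]) (simp add: x'_def)
    also have "\<dots> = (\<Sum>k<card J. \<Sum>l<card J. cnj (x' (pick J k)) * A $$ (pick J k, pick J l) * x' (pick J l))"
      by (intro sum.cong refl sum_pick[OF J]) (simp add: x'_def)
    also have "\<dots> = form_on (card J) (entries (submatrix A J J)) x x"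
      unfolding form_on_def by (intro sum.cong refl) (simp add: sub(2) x'_pick)
    finally show "Im (form_on (card J) (entries (submatrix A J J)) x x) = 0
        \<and> 0 \<le> Re (form_on (card J) (entries (submatrix A J J)) x x)"
      using psd_on_Im_form[OF A'(2), of x'] psd_on_Re_form_nonneg[OF A'(2), of x'] by simp
  qed
  then show ?thesis
    using sub(1) psd_iff_psd_on by blast
qed

lemma solution_submatrix:
  assumes A: "A \<in> carrier_mat n n" and J: "J \<subseteq> {..<n}" and off_J: "\<And>i. i < n \<Longrightarrow> i \<notin> J \<Longrightarrow> u i = 0"
    and sol: "\<And>i. i < n \<Longrightarrow> (\<Sum>j<n. A $$ (i, j) * complex_of_real (u j)) = 1"
    and k: "k < card J"
  shows "(\<Sum>l<card J. submatrix A J J $$ (k, l) * complex_of_real (u (pick J l))) = 1"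
proof -
  have "(\<Sum>l<card J. submatrix A J J $$ (k, l) * complex_of_real (u (pick J l)))
      = (\<Sum>l<card J. A $$ (pick J k, pick J l) * complex_of_real (u (pick J l)))"
    using k by (intro sum.cong refl) (simp add: submatrix_carrier_index(2)[OF A J])
  also have "\<dots> = (\<Sum>j<n. A $$ (pick J k, j) * complex_of_real (u j))"
    by (rule sum_pick[OF J, symmetric]) (simp add: off_J)
  also have "\<dots> = 1"
    by (rule sol[OF pick_less[OF J k]])
  finally show ?thesis .
qed

theorem I_mat_I_sp_submatrix_support:
  assumes n: "n > 0" and A: "psd n A" and nonneg: "\<forall>i<n. \<forall>j<n. 0 \<le> A $$ (i, j)"
    and u: "\<And>i. i < n \<Longrightarrow> 0 \<le> u i"
    and sol: "\<And>i. i < n \<Longrightarrow> (\<Sum>j<n. A $$ (i, j) * complex_of_real (u j)) = 1"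
  defines "J \<equiv> {i. i < n \<and> u i \<noteq> 0}"
  shows "I_mat (submatrix A J J) = I_mat A" and "I_sp (submatrix A J J) = I_mat A"
proof -
  have J: "J \<subseteq> {..<n}" and off_J: "\<And>i. i < n \<Longrightarrow> i \<notin> J \<Longrightarrow> u i = 0"
    unfolding J_def by auto
  have A_carrier: "A \<in> carrier_mat n n"
    using A unfolding psd_def by simp
  note sol_J = solution_submatrix[OF A_carrier J off_J sol]
  have sum_u: "(\<Sum>i<n. u i) = (\<Sum>k<card J. u (pick J k))"
    using off_J by (rule sum_pick[OF J])
  then have "0 < card J"
    using I_mat_eq_of_solution(1)[OF n A sol] by (cases "card J") auto
  have psd_J: "psd (card J) (submatrix A J J)"
    by (rule psd_submatrix[OF A J])
  have nonneg_J: "\<forall>k<card J. \<forall>l<card J. 0 \<le> submatrix A J J $$ (k, l)"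
    using nonneg pick_less[OF J] by (simp add: submatrix_carrier_index(2)[OF A_carrier J])
  have u_J: "0 \<le> u (pick J k)" if "k < card J" for k
    using u pick_less[OF J that] by simp
  show "I_mat (submatrix A J J) = I_mat A"
    using I_mat_eq_of_solution(2)[OF \<open>0 < card J\<close> psd_J sol_J] I_mat_eq_of_solution(2)[OF n A sol]
    unfolding sum_u by simp
  then show "I_sp (submatrix A J J) = I_mat A"
    using I_sp_eq_I_mat_of_solution(2)[OF \<open>0 < card J\<close> psd_J nonneg_J u_J sol_J] by simp
qed

lemma mult_mat_vec_of_real_eq_ones_iff:
  assumes "A \<in> carrier_mat n n" "u \<in> carrier_vec n"
  shows "A *\<^sub>v map_vec complex_of_real u = vec n (\<lambda>_. 1)
    \<longleftrightarrow> (\<forall>i<n. (\<Sum>j<n. A $$ (i, j) * complex_of_real (u $ j)) = 1)"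
  using assms by (auto simp: vec_eq_iff scalar_prod_def Matrix.row_def atLeast0LessThan)

lemma nonneg_vec_solution_iff_I_sp_eq_I_mat:
  assumes n: "n > 0" and A: "psd n A" and nonneg: "\<forall>i<n. \<forall>j<n. 0 \<le> A $$ (i, j)"
    and diag: "\<forall>i<n. A $$ (i, i) \<noteq> 0"
  shows "(\<exists>u \<in> carrier_vec n. (\<forall>i<n. u $ i \<ge> (0::real)) \<and> A *\<^sub>v map_vec complex_of_real u = vec n (\<lambda>_. 1))
    \<longleftrightarrow> I_sp A = I_mat A" (is "?solvable \<longleftrightarrow> _")
proof -
  have A_carrier: "A \<in> carrier_mat n n"
    using A unfolding psd_def by simp
  note solution_iff = mult_mat_vec_of_real_eq_ones_iff[OF A_carrier]
  show ?thesis
  proof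
    assume ?solvable
    then obtain u :: "real vec" where "u \<in> carrier_vec n" "\<forall>i<n. u $ i \<ge> 0" "A *\<^sub>v map_vec complex_of_real u = vec n (\<lambda>_. 1)"
      by blast
    then show "I_sp A = I_mat A"
      using solution_iff by (intro I_sp_eq_I_mat_of_solution(2)[OF n A nonneg, where u = "vec_index u"]) auto
  next
    assume eq: "I_sp A = I_mat A"
    obtain u where "\<And>i. i < n \<Longrightarrow> 0 \<le> u i" "\<And>i. i < n \<Longrightarrow> (\<Sum>j<n. A $$ (i, j) * complex_of_real (u j)) = 1"
      using solution_of_I_sp_eq_I_mat[OF n A nonneg diag eq] by blast
    then show ?solvable
      using solution_iff[of "vec n u"] by (intro bexI[of _ "vec n u"]) auto
  qed
qed

lemma nonneg_vec_solution_consequences: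
  fixes u :: "real vec"
  assumes n: "n > 0" and A: "psd n A" and nonneg: "\<forall>i<n. \<forall>j<n. 0 \<le> A $$ (i, j)"
    and u: "u \<in> carrier_vec n" "\<forall>i<n. u $ i \<ge> 0" "A *\<^sub>v map_vec complex_of_real u = vec n (\<lambda>_. 1)"
  defines "x \<equiv> vec n (\<lambda>i. complex_of_real (sqrt ((I_mat A \<cdot>\<^sub>v u) $ i)))"
    and "J \<equiv> {i. i < n \<and> u $ i \<noteq> 0}"
  shows "vnorm x = 1"
    and "spec_norm (A \<circ>\<^sub>h mat n n (\<lambda>(i,j). x $ i * cnj (x $ j))) = I_sp A"
    and "I_mat (submatrix A J J) = I_mat A" and "I_sp (submatrix A J J) = I_mat A"
proof -
  have A_carrier: "A \<in> carrier_mat n n"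
    using A unfolding psd_def by simp
  have sol: "\<And>i. i < n \<Longrightarrow> (\<Sum>j<n. A $$ (i, j) * complex_of_real (u $ j)) = 1"
    using u mult_mat_vec_of_real_eq_ones_iff[OF A_carrier] by auto
  have u_nonneg: "\<And>i. i < n \<Longrightarrow> 0 \<le> u $ i"
    using u(2) by simp
  have x_index: "x $ i = complex_of_real (sqrt (I_mat A * u $ i))" if "i < n" for i
    unfolding x_def using u(1) that by simp
  have "vnorm x = norm_on n (vec_index x)"
    unfolding x_def by (simp add: vnorm_eq_norm_on)
  also have "\<dots> = 1"
    using norm_on_sqrt_solution[OF n A u_nonneg sol] x_index by (simp cong: norm_on_cong)
  finally show "vnorm x = 1" .
  show "spec_norm (A \<circ>\<^sub>h mat n n (\<lambda>(i,j). x $ i * cnj (x $ j))) = I_sp A"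
    using I_sp_eq_I_mat_of_solution[OF n A nonneg u_nonneg sol] x_index
    by (simp add: spec_norm_hadamard[OF A_carrier] cong: opnorm_on_cong)
  show "I_mat (submatrix A J J) = I_mat A" "I_sp (submatrix A J J) = I_mat A"
    using I_mat_I_sp_submatrix_support[OF n A nonneg u_nonneg sol] unfolding J_def by simp_all
qed

theorem theorem2p8:
  fixes A :: "complex mat" and n :: nat
  assumes "n > 0"
    and "psd n A"
    and "\<forall>i<n. \<forall>j<n. Im (A $$ (i,j)) = 0 \<and> Re (A $$ (i,j)) \<ge> 0"
    and "\<forall>i<n. A $$ (i,i) \<noteq> 0"
  shows "((\<exists>u \<in> carrier_vec n. (\<forall>i<n. u $ i \<ge> (0::real)) \<and>
              A *\<^sub>v map_vec complex_of_real u = vec n (\<lambda>_. 1))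
          \<longleftrightarrow> I_sp A = I_mat A)
    \<and> (\<forall>u \<in> carrier_vec n. (\<forall>i<n. u $ i \<ge> (0::real)) \<and>
              A *\<^sub>v map_vec complex_of_real u = vec n (\<lambda>_. 1) \<longrightarrow>
         (let y = I_mat A \<cdot>\<^sub>v u;
              x = vec n (\<lambda>i. complex_of_real (sqrt (y $ i)));
              J = {i. i < n \<and> u $ i \<noteq> 0}
          in vnorm x = 1
             \<and> spec_norm (A \<circ>\<^sub>h mat n n (\<lambda>(i,j). x $ i * cnj (x $ j))) = I_sp A
             \<and> I_mat A = I_mat (submatrix A J J)
             \<and> I_mat (submatrix A J J) = I_sp (submatrix A J J)
             \<and> I_sp (submatrix A J J) = I_sp A))"
proof -
  have nonneg: "\<forall>i<n. \<forall>j<n. 0 \<le> A $$ (i, j)"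
    using assms(3) by (simp add: less_eq_complex_def)
  note equivalence = nonneg_vec_solution_iff_I_sp_eq_I_mat[OF assms(1,2) nonneg assms(4)]
  note consequences = nonneg_vec_solution_consequences[OF assms(1,2) nonneg]
  show ?thesis
    unfolding Let_def using equivalence consequences by auto
qed

end
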